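(* In the setting described in the context, let $\sigma_w,\sigma_v$ be real scalars and consider the system $$\tilde\Sigma_\tau(s)=R^T\big(sI+L_{e,s}^\tau RWR^T\big)^{-1}\begin{bmatrix}\sigma_wD_\tau^TE^{-1/2} & -\sigma_vL_{e,s}^\tau RW^{1/2}\end{bmatrix}.$$ Then $\|\tilde\Sigma_\tau\|_\infty^2=\bar\sigma(Z)$, where $$Z=\sigma_w^2R^T\big(RWR^TL_{e,s}^\tau RWR^T\big)^{-1}R+\sigma_v^2R^T\big(RWR^T\big)^{-1}R.$$
   Context: Let $\mathcal G$ be an undirected, connected graph without self-loops, with node set $\{1,\dots,n\}$ ($n\ge2$) and edge set $\mathcal E$, $m=|\mathcal E|$. Give each edge an arbitrary orientation; the incidence matrix $D\in\mathbb R^{n\times m}$ has $D_{il}=1$ if node $i$ is the initial node of edge $l$, $-1$ if it is the terminal node, and $0$ otherwise. Fix a spanning tree $\mathcal G_\tau$ and order the edges so the first $n-1$ are tree edges; write $D=[D_\tau\ D_c]$ with $D_\tau\in\mathbb R^{n\times(n-1)}$. Set $T_\tau^c=(D_\tau^TD_\tau)^{-1}D_\tau^TD_c$ and $R=[I_{n-1}\ T_\tau^c]\in\mathbb R^{(n-1)\times m}$. Let $W=\mathrm{diag}(w_1,\dots,w_m)$, $w_l>0$, and $E=\mathrm{diag}(\epsilon_1,\dots,\epsilon_n)$, $\epsilon_i>0$; $W^{1/2},E^{-1/2}$ are taken entrywise on the diagonal. Define $L_{e,s}^\tau=D_\tau^TE^{-1}D_\tau$. For a stable transfer matrix $\Phi(s)$,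 $\|\Phi\|_\infty=\sup_{\omega\in\mathbb R}\bar\sigma(\Phi(j\omega))$ where $\bar\sigma$ is the largest singular value. *)

theory Defs
  imports "Jordan_Normal_Form.Schur_Decomposition" "Jordan_Normal_Form.Gauss_Jordan_Elimination"
begin

(* Nodes are 0..<n (paper: 1..n), edges are 0..<m; edge l is oriented from
   src l (initial node) to tgt l (terminal node). *)

definition valid_graph :: "nat \<Rightarrow> nat \<Rightarrow> (nat \<Rightarrow> nat) \<Rightarrow> (nat \<Rightarrow> nat) \<Rightarrow> bool" where
  "valid_graph n m src tgt \<longleftrightarrow>
     (\<forall>l<m. src l < n \<and> tgt l < n \<and> src l \<noteq> tgt l) \<and>
     (\<forall>l<m. \<forall>l'<m. l \<noteq> l' \<longrightarrow> {src l, tgt l} \<noteq> {src l', tgt l'})"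

definition adj_in :: "(nat \<Rightarrow> nat) \<Rightarrow> (nat \<Rightarrow> nat) \<Rightarrow> nat set \<Rightarrow> (nat \<times> nat) set" where
  "adj_in src tgt S = {(i, j). \<exists>l\<in>S. {i, j} = {src l, tgt l}}"

definition connected_in :: "nat \<Rightarrow> (nat \<Rightarrow> nat) \<Rightarrow> (nat \<Rightarrow> nat) \<Rightarrow> nat set \<Rightarrow> bool" where
  "connected_in n src tgt S \<longleftrightarrow> (\<forall>i<n. \<forall>j<n. (i, j) \<in> (adj_in src tgt S)\<^sup>*)"

(* S is the edge set of a spanning tree: it connects all nodes and is minimally
   connected (every edge is a bridge, i.e. there is no cycle). *)
definition spanning_tree :: "nat \<Rightarrow> (nat \<Rightarrow> nat) \<Rightarrow> (nat \<Rightarrow> nat) \<Rightarrow> nat set \<Rightarrow> bool" where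
  "spanning_tree n src tgt S \<longleftrightarrow> connected_in n src tgt S \<and>
     (\<forall>l\<in>S. (src l, tgt l) \<notin> (adj_in src tgt (S - {l}))\<^sup>*)"

definition incidence :: "nat \<Rightarrow> nat \<Rightarrow> (nat \<Rightarrow> nat) \<Rightarrow> (nat \<Rightarrow> nat) \<Rightarrow> real mat" where
  "incidence n m src tgt = mat n m (\<lambda>(i, l). if i = src l then 1 else if i = tgt l then -1 else 0)"

definition D_tau :: "nat \<Rightarrow> nat \<Rightarrow> (nat \<Rightarrow> nat) \<Rightarrow> (nat \<Rightarrow> nat) \<Rightarrow> real mat" where
  "D_tau n m src tgt = mat n (n - 1) (\<lambda>(i, l). incidence n m src tgt $$ (i, l))"

definition D_c :: "nat \<Rightarrow> nat \<Rightarrow> (nat \<Rightarrow> nat) \<Rightarrow> (nat \<Rightarrow> nat) \<Rightarrow> real mat" where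
  "D_c n m src tgt = mat n (m - (n - 1)) (\<lambda>(i, l). incidence n m src tgt $$ (i, l + (n - 1)))"

(* matrix inverse (only used on invertible square matrices) *)
definition minv :: "'a :: field mat \<Rightarrow> 'a mat" where
  "minv A = (case mat_inverse A of Some B \<Rightarrow> B | None \<Rightarrow> 0\<^sub>m (dim_col A) (dim_row A))"

definition hcat :: "'a :: zero mat \<Rightarrow> 'a mat \<Rightarrow> 'a mat" where
  "hcat A B = mat (dim_row A) (dim_col A + dim_col B)
     (\<lambda>(i, j). if j < dim_col A then A $$ (i, j) else B $$ (i, j - dim_col A))"

definition T_tau_c :: "nat \<Rightarrow> nat \<Rightarrow> (nat \<Rightarrow> nat) \<Rightarrow> (nat \<Rightarrow> nat) \<Rightarrow> real mat" where
  "T_tau_c n m src tgt =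
     minv (transpose_mat (D_tau n m src tgt) * D_tau n m src tgt) *
       transpose_mat (D_tau n m src tgt) * D_c n m src tgt"

definition R_mat :: "nat \<Rightarrow> nat \<Rightarrow> (nat \<Rightarrow> nat) \<Rightarrow> (nat \<Rightarrow> nat) \<Rightarrow> real mat" where
  "R_mat n m src tgt = hcat (1\<^sub>m (n - 1)) (T_tau_c n m src tgt)"

(* L_{e,s}^tau = D_tau^T E^{-1} D_tau, E = diag(eps 0, ..., eps (n-1)) *)
definition L_es :: "nat \<Rightarrow> nat \<Rightarrow> (nat \<Rightarrow> nat) \<Rightarrow> (nat \<Rightarrow> nat) \<Rightarrow> (nat \<Rightarrow> real) \<Rightarrow> real mat" where
  "L_es n m src tgt eps =
     transpose_mat (D_tau n m src tgt) * mat_diag n (\<lambda>i. 1 / eps i) * D_tau n m src tgt"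

definition cmat :: "real mat \<Rightarrow> complex mat" where
  "cmat A = map_mat complex_of_real A"

definition Sigma_tau :: "nat \<Rightarrow> nat \<Rightarrow> (nat \<Rightarrow> nat) \<Rightarrow> (nat \<Rightarrow> nat) \<Rightarrow> (nat \<Rightarrow> real) \<Rightarrow>
    (nat \<Rightarrow> real) \<Rightarrow> real \<Rightarrow> real \<Rightarrow> complex \<Rightarrow> complex mat" where
  "Sigma_tau n m src tgt w eps sw sv s =
     (let R = R_mat n m src tgt; L = L_es n m src tgt eps; W = mat_diag m w;
          Dt = D_tau n m src tgt;
          B = hcat (sw \<cdot>\<^sub>m (transpose_mat Dt * mat_diag n (\<lambda>i. 1 / sqrt (eps i))))
                   ((- sv) \<cdot>\<^sub>m (L * R * mat_diag m (\<lambda>l. sqrt (w l))))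
      in cmat (transpose_mat R) *
         minv (s \<cdot>\<^sub>m 1\<^sub>m (n - 1) + cmat (L * R * W * transpose_mat R)) * cmat B)"

definition Z_mat :: "nat \<Rightarrow> nat \<Rightarrow> (nat \<Rightarrow> nat) \<Rightarrow> (nat \<Rightarrow> nat) \<Rightarrow> (nat \<Rightarrow> real) \<Rightarrow>
    (nat \<Rightarrow> real) \<Rightarrow> real \<Rightarrow> real \<Rightarrow> real mat" where
  "Z_mat n m src tgt w eps sw sv =
     (let R = R_mat n m src tgt; L = L_es n m src tgt eps; W = mat_diag m w;
          RWR = R * W * transpose_mat R
      in (sw\<^sup>2) \<cdot>\<^sub>m (transpose_mat R * minv (RWR * L * RWR) * R) +
         (sv\<^sup>2) \<cdot>\<^sub>m (transpose_mat R * minv RWR * R))"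

definition sigma_max :: "complex mat \<Rightarrow> real" where
  "sigma_max A = Max {sqrt (Re k) | k. eigenvalue (mat_adjoint A * A) k}"

definition hinf_norm :: "(complex \<Rightarrow> complex mat) \<Rightarrow> real" where
  "hinf_norm F = (SUP \<omega>::real. sigma_max (F (\<i> * complex_of_real \<omega>)))"

end

theory Submission
  imports Defs "Jordan_Normal_Form.Spectral_Radius"
begin

text \<open>Write \<open>S = L M\<close> with the positive definite matrices \<open>L = D_tau\<^sup>T E\<^sup>-\<^sup>1 D_tau\<close> and
  \<open>M = R W R\<^sup>T\<close>, so that the transfer matrix is \<open>R\<^sup>T (s I + S)\<^sup>-\<^sup>1 B\<close>. With
  \<open>X = \<sigma>_w\<^sup>2 (M L M)\<^sup>-\<^sup>1 + \<sigma>_v\<^sup>2 M\<^sup>-\<^sup>1\<close> one has \<open>B B\<^sup>T = S X S\<^sup>T\<close> and \<open>S X = X S\<^sup>T\<close>, hence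
  \<open>(j\<omega> I + S) X (j\<omega> I + S)\<^sup>* = S X S\<^sup>T + \<omega>\<^sup>2 X\<close>. Consequently
  \<open>\<Sigma>(j\<omega>) \<Sigma>(j\<omega>)\<^sup>* + \<omega>\<^sup>2 F F\<^sup>* = R\<^sup>T X R = Z\<close> for some \<open>F\<close>: the Gram matrix of the
  frequency response is dominated by \<open>Z\<close>, with equality at \<open>\<omega> = 0\<close>. So the largest singular
  value peaks at \<open>\<omega> = 0\<close>, where its square is the spectral radius of the positive
  semidefinite \<open>Z\<close>, which is also its largest singular value.\<close>

section \<open>Injective matrices and inverses\<close>

definition inj_mat :: "'a :: semiring_0 mat \<Rightarrow> bool" where
  "inj_mat A \<longleftrightarrow>
     (\<forall>v \<in> carrier_vec (dim_col A). A *\<^sub>v v = 0\<^sub>v (dim_row A) \<longrightarrow> v = 0\<^sub>v (dim_col A))"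

lemma inj_matI:
  assumes "A \<in> carrier_mat a b" and "\<And>v. v \<in> carrier_vec b \<Longrightarrow> A *\<^sub>v v = 0\<^sub>v a \<Longrightarrow> v = 0\<^sub>v b"
  shows "inj_mat A"
  using assms unfolding inj_mat_def by auto

lemma inj_matD:
  "inj_mat A \<Longrightarrow> A \<in> carrier_mat a b \<Longrightarrow> v \<in> carrier_vec b \<Longrightarrow> A *\<^sub>v v = 0\<^sub>v a \<Longrightarrow> v = 0\<^sub>v b"
  unfolding inj_mat_def by auto

lemma inj_mat_mult:
  assumes "inj_mat A" "inj_mat B" and A: "A \<in> carrier_mat a k" and B: "B \<in> carrier_mat k b"
  shows "inj_mat (A * B)"
proof (rule inj_matI)
  show "A * B \<in> carrier_mat a b" using A B by simp
  fix v assume v: "v \<in> carrier_vec b" and "(A * B) *\<^sub>v v = 0\<^sub>v a"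
  then have "A *\<^sub>v (B *\<^sub>v v) = 0\<^sub>v a" using A B by (simp add: assoc_mult_mat_vec)
  then have "B *\<^sub>v v = 0\<^sub>v k" using inj_matD[OF \<open>inj_mat A\<close> A] B v by simp
  then show "v = 0\<^sub>v b" using inj_matD[OF \<open>inj_mat B\<close> B v] by simp
qed

lemma minv_carrier:
  assumes A: "(A :: 'a :: field mat) \<in> carrier_mat n n"
  shows "minv A \<in> carrier_mat n n"
proof (cases "mat_inverse A")
  case (Some B)
  then show ?thesis unfolding minv_def using mat_inverse(2)[OF A Some] by simp
qed (use A in \<open>simp add: minv_def\<close>)

lemma minv_inverse:
  fixes A :: "'a :: field mat"
  assumes A: "A \<in> carrier_mat n n" and "inj_mat A"
  shows "A * minv A = 1\<^sub>m n" "minv A * A = 1\<^sub>m n"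
proof -
  have "det A \<noteq> 0" using det_0_iff_vec_prod_zero[OF A] inj_matD[OF \<open>inj_mat A\<close> A] by blast
  then have "A \<in> Units (ring_mat TYPE('a) n n)" by (rule det_non_zero_imp_unit[OF A])
  then obtain B where "mat_inverse A = Some B"
    using mat_inverse(1)[OF A, of n] by (cases "mat_inverse A") auto
  then show "A * minv A = 1\<^sub>m n" "minv A * A = 1\<^sub>m n"
    unfolding minv_def using mat_inverse(2)[OF A] by auto
qed

lemma dim_mat_adjoint [simp]:
  "dim_row (mat_adjoint A) = dim_col A" "dim_col (mat_adjoint A) = dim_row A"
  unfolding mat_adjoint_def by auto

lemma index_mat_adjoint [simp]:
  "i < dim_col A \<Longrightarrow> j < dim_row A \<Longrightarrow> mat_adjoint A $$ (i, j) = conjugate (A $$ (j, i))"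
  unfolding mat_adjoint_def by (simp add: mat_of_rows_index)

lemma mat_adjoint_carrier [simp]: "A \<in> carrier_mat a b \<Longrightarrow> mat_adjoint A \<in> carrier_mat b a"
  using carrier_matD[of A a b] by (intro carrier_matI) simp_all

lemma mat_adjoint_mult_self_carrier: "A \<in> carrier_mat a b \<Longrightarrow> mat_adjoint A * A \<in> carrier_mat b b"
  and mult_mat_adjoint_self_carrier: "A \<in> carrier_mat a b \<Longrightarrow> A * mat_adjoint A \<in> carrier_mat a a"
  by (meson mat_adjoint_carrier mult_carrier_mat)+

lemma mat_adjoint_adjoint [simp]: "mat_adjoint (mat_adjoint (A :: complex mat)) = A"
  by (intro eq_matI) auto

lemma mat_adjoint_mult:
  fixes A B :: "complex mat"
  assumes "dim_col A = dim_row B"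
  shows "mat_adjoint (A * B) = mat_adjoint B * mat_adjoint A"
proof (rule eq_matI)
  fix i j
  assume "i < dim_row (mat_adjoint B * mat_adjoint A)" "j < dim_col (mat_adjoint B * mat_adjoint A)"
  then show "mat_adjoint (A * B) $$ (i, j) = (mat_adjoint B * mat_adjoint A) $$ (i, j)"
    using assms by (simp add: scalar_prod_def cnj_sum mult.commute)
qed auto

lemma mat_adjoint_add:
  fixes A B :: "complex mat"
  assumes "A \<in> carrier_mat a b" "B \<in> carrier_mat a b"
  shows "mat_adjoint (A + B) = mat_adjoint A + mat_adjoint B"
  using assms by (intro eq_matI) auto

lemma mat_adjoint_smult: "mat_adjoint (c \<cdot>\<^sub>m (A :: complex mat)) = cnj c \<cdot>\<^sub>m mat_adjoint A"
  by (intro eq_matI) auto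

lemma mat_adjoint_one [simp]: "mat_adjoint (1\<^sub>m n :: complex mat) = 1\<^sub>m n"
  by (intro eq_matI) auto

lemma mat_adjoint_inner:
  fixes A :: "complex mat"
  assumes "A \<in> carrier_mat a b" "u \<in> carrier_vec b" "w \<in> carrier_vec a"
  shows "(A *\<^sub>v u) \<bullet>c w = u \<bullet>c (mat_adjoint A *\<^sub>v w)"
proof -
  have "(A *\<^sub>v u) \<bullet>c w = (\<Sum>i<a. (\<Sum>j<b. A $$ (i, j) * u $ j) * cnj (w $ i))"
    using assms by (auto simp: scalar_prod_def atLeast0LessThan intro!: sum.cong)
  also have "\<dots> = (\<Sum>i<a. \<Sum>j<b. u $ j * (A $$ (i, j) * cnj (w $ i)))"
    by (simp add: sum_distrib_left sum_distrib_right mult_ac)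
  also have "\<dots> = (\<Sum>j<b. \<Sum>i<a. u $ j * (A $$ (i, j) * cnj (w $ i)))"
    by (rule sum.swap)
  also have "\<dots> = u \<bullet>c (mat_adjoint A *\<^sub>v w)"
    using assms by (auto simp: scalar_prod_def atLeast0LessThan cnj_sum sum_distrib_left
        intro!: sum.cong)
  finally show ?thesis .
qed

lemma inner_self_real:
  fixes x :: "complex vec"
  shows "Im (x \<bullet>c x) = 0" "0 \<le> Re (x \<bullet>c x)" "x \<bullet>c x = complex_of_real (Re (x \<bullet>c x))"
proof -
  have "0 \<le> x \<bullet>c x" by (rule conjugate_square_ge_0_vec)
  then show "Im (x \<bullet>c x) = 0" "0 \<le> Re (x \<bullet>c x)" by (auto simp: less_eq_complex_def)
  then show "x \<bullet>c x = complex_of_real (Re (x \<bullet>c x))" by (simp add: complex_eq_iff)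
qed

lemma inner_self_Re_eq_0_iff:
  fixes x :: "complex vec"
  assumes "x \<in> carrier_vec n"
  shows "Re (x \<bullet>c x) = 0 \<longleftrightarrow> x = 0\<^sub>v n"
  using conjugate_square_eq_0_vec[OF assms] inner_self_real(1)[of x] by (auto simp: complex_eq_iff)

lemma inner_self_Re_pos:
  fixes x :: "complex vec"
  assumes "x \<in> carrier_vec n" "x \<noteq> 0\<^sub>v n"
  shows "0 < Re (x \<bullet>c x)"
  using inner_self_real(2)[of x] inner_self_Re_eq_0_iff[OF assms(1)] assms(2) by linarith

lemma inner_commute_cnj:
  fixes x y :: "complex vec"
  assumes "x \<in> carrier_vec n" "y \<in> carrier_vec n"
  shows "y \<bullet>c x = cnj (x \<bullet>c y)"
  using assms by (simp add: scalar_prod_def cnj_sum mult.commute)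

lemma inner_gram:
  fixes F :: "complex mat"
  assumes F: "F \<in> carrier_mat a b" and v: "v \<in> carrier_vec b"
  shows "((mat_adjoint F * F) *\<^sub>v v) \<bullet>c v = (F *\<^sub>v v) \<bullet>c (F *\<^sub>v v)"
  using mat_adjoint_inner[of "mat_adjoint F" b a "F *\<^sub>v v" v] F v
  by (simp add: assoc_mult_mat_vec[of _ b a F b])

lemma inj_mat_gram:
  fixes F :: "complex mat"
  assumes F: "F \<in> carrier_mat a b" and "inj_mat F"
  shows "inj_mat (mat_adjoint F * F)"
proof (rule inj_matI)
  show "mat_adjoint F * F \<in> carrier_mat b b" by (rule mat_adjoint_mult_self_carrier[OF F])
  fix v assume v: "v \<in> carrier_vec b" and "(mat_adjoint F * F) *\<^sub>v v = 0\<^sub>v b"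
  then have "(F *\<^sub>v v) \<bullet>c (F *\<^sub>v v) = 0" using inner_gram[OF F v] by simp
  then have "F *\<^sub>v v = 0\<^sub>v a" using conjugate_square_eq_0_vec[of "F *\<^sub>v v" a] F v by simp
  then show "v = 0\<^sub>v b" using inj_matD[OF \<open>inj_mat F\<close> F v] by simp
qed

lemma dim_cmat [simp]: "dim_row (cmat A) = dim_row A" "dim_col (cmat A) = dim_col A"
  by (auto simp: cmat_def)

lemma cmat_carrier_iff [simp]: "cmat A \<in> carrier_mat a b \<longleftrightarrow> A \<in> carrier_mat a b"
  unfolding carrier_mat_def by (simp only: mem_Collect_eq dim_cmat)

lemma cmat_mult: "dim_col A = dim_row B \<Longrightarrow> cmat (A * B) = cmat A * cmat B"
  unfolding cmat_def by (rule of_real_hom.mat_hom_mult) auto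

lemma mat_adjoint_cmat: "mat_adjoint (cmat A) = cmat (transpose_mat A)"
  by (intro eq_matI) (auto simp: cmat_def)

lemma inj_mat_cmat_iff:
  assumes A: "A \<in> carrier_mat a b"
  shows "inj_mat (cmat A) \<longleftrightarrow> inj_mat A"
proof
  assume inj: "inj_mat (cmat A)"
  show "inj_mat A"
  proof (rule inj_matI[OF A])
    fix x assume x: "x \<in> carrier_vec b" and "A *\<^sub>v x = 0\<^sub>v a"
    have "cmat A *\<^sub>v map_vec complex_of_real x = map_vec complex_of_real (A *\<^sub>v x)"
      using A x by (auto intro!: eq_vecI simp: cmat_def scalar_prod_def)
    also have "\<dots> = 0\<^sub>v a" using \<open>A *\<^sub>v x = 0\<^sub>v a\<close> by (auto simp: vec_eq_iff)
    finally have "cmat A *\<^sub>v map_vec complex_of_real x = 0\<^sub>v a" .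
    then have "map_vec complex_of_real x = 0\<^sub>v b"
      using inj_matD[OF inj, of a b "map_vec complex_of_real x"] A x by simp
    then show "x = 0\<^sub>v b" by simp
  qed
next
  assume inj: "inj_mat A"
  show "inj_mat (cmat A)"
  proof (rule inj_matI)
    show "cmat A \<in> carrier_mat a b" using A by simp
    fix v assume v: "v \<in> carrier_vec b" and Av: "cmat A *\<^sub>v v = 0\<^sub>v a"
    have "map_vec f v = 0\<^sub>v b" if f: "f = Re \<or> f = Im" for f
    proof (rule inj_matD[OF inj A])
      have "A *\<^sub>v map_vec f v = map_vec f (cmat A *\<^sub>v v)"
        using A v f by (auto intro!: eq_vecI simp: cmat_def scalar_prod_def Re_sum Im_sum)
      then show "A *\<^sub>v map_vec f v = 0\<^sub>v a" using Av f by (auto simp: vec_eq_iff)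
    qed (use v in simp)
    from this[of Re] this[of Im] show "v = 0\<^sub>v b"
      using v by (auto simp: vec_eq_iff complex_eq_iff)
  qed
qed

lemma inj_mat_transpose_gram:
  fixes F :: "real mat"
  assumes F: "F \<in> carrier_mat a b" and "inj_mat F"
  shows "inj_mat (transpose_mat F * F)"
proof -
  have "cmat (transpose_mat F * F) = mat_adjoint (cmat F) * cmat F"
    using F by (simp add: cmat_mult mat_adjoint_cmat)
  moreover have "inj_mat (mat_adjoint (cmat F) * cmat F)"
    using inj_mat_gram[of "cmat F" a b] F inj_mat_cmat_iff[OF F] \<open>inj_mat F\<close> by simp
  ultimately show ?thesis using inj_mat_cmat_iff[of "transpose_mat F * F" b b] F by simp
qed

section \<open>Spectral radius and largest singular value\<close>

lemma eigenvalue_gram_nonneg: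
  fixes G :: "complex mat"
  assumes G: "G \<in> carrier_mat a b" and "eigenvalue (mat_adjoint G * G) k"
  shows "Im k = 0" "0 \<le> Re k"
proof -
  obtain v where v: "v \<in> carrier_vec b" "v \<noteq> 0\<^sub>v b" "(mat_adjoint G * G) *\<^sub>v v = k \<cdot>\<^sub>v v"
    using assms unfolding eigenvalue_def eigenvector_def by auto
  have "k * (v \<bullet>c v) = (G *\<^sub>v v) \<bullet>c (G *\<^sub>v v)"
    using inner_gram[OF G v(1)] v by simp
  then have "k * complex_of_real (Re (v \<bullet>c v)) = complex_of_real (Re ((G *\<^sub>v v) \<bullet>c (G *\<^sub>v v)))"
    using inner_self_real(3) by metis
  moreover have "0 < Re (v \<bullet>c v)" by (rule inner_self_Re_pos[OF v(1,2)])
  ultimately have "k = complex_of_real (Re ((G *\<^sub>v v) \<bullet>c (G *\<^sub>v v)) / Re (v \<bullet>c v))"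
    by (simp add: field_simps)
  then show "Im k = 0" "0 \<le> Re k"
    using \<open>0 < Re (v \<bullet>c v)\<close> inner_self_real(2)[of "G *\<^sub>v v"] by auto
qed

lemma eigenvalue_mult_swap:
  fixes A B :: "'a :: field mat"
  assumes A: "A \<in> carrier_mat a b" and B: "B \<in> carrier_mat b a"
    and "eigenvalue (A * B) k" and "k \<noteq> 0"
  shows "eigenvalue (B * A) k"
proof -
  obtain v where v: "v \<in> carrier_vec a" "v \<noteq> 0\<^sub>v a" "(A * B) *\<^sub>v v = k \<cdot>\<^sub>v v"
    using assms unfolding eigenvalue_def eigenvector_def by auto
  have ABv: "A *\<^sub>v (B *\<^sub>v v) = k \<cdot>\<^sub>v v" using v A B by (simp add: assoc_mult_mat_vec)
  have "B *\<^sub>v v \<noteq> 0\<^sub>v b"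
  proof
    assume "B *\<^sub>v v = 0\<^sub>v b"
    moreover have "A *\<^sub>v 0\<^sub>v b = 0\<^sub>v a" using A by auto
    ultimately have "k \<cdot>\<^sub>v v = 0\<^sub>v a" using ABv by simp
    then show False using v \<open>k \<noteq> 0\<close> by (auto simp: vec_eq_iff)
  qed
  moreover have "(B * A) *\<^sub>v (B *\<^sub>v v) = k \<cdot>\<^sub>v (B *\<^sub>v v)"
    using ABv A B v by (simp add: assoc_mult_mat_vec mult_mat_vec)
  ultimately have "eigenvector (B * A) (B *\<^sub>v v) k"
    unfolding eigenvector_def using A B v by simp
  then show ?thesis unfolding eigenvalue_def by blast
qed

lemma eigenvalue_square_root:
  fixes A :: "'a :: field mat"
  assumes A: "A \<in> carrier_mat n n" and "eigenvalue (A * A) (r * r)"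
  shows "eigenvalue A r \<or> eigenvalue A (- r)"
proof -
  obtain u where u: "u \<in> carrier_vec n" "u \<noteq> 0\<^sub>v n" "A *\<^sub>v (A *\<^sub>v u) = (r * r) \<cdot>\<^sub>v u"
    using assms unfolding eigenvalue_def eigenvector_def by (auto simp: assoc_mult_mat_vec)
  define w where "w = A *\<^sub>v u + r \<cdot>\<^sub>v u"
  have Au: "A *\<^sub>v u \<in> carrier_vec n" using A u by simp
  have "A *\<^sub>v w = A *\<^sub>v (A *\<^sub>v u) + r \<cdot>\<^sub>v (A *\<^sub>v u)"
    unfolding w_def using A u Au by (simp add: mult_add_distrib_mat_vec mult_mat_vec)
  also have "\<dots> = r \<cdot>\<^sub>v w"
    unfolding u(3) w_def using A u(1) Au by (intro eq_vecI) (simp_all add: algebra_simps)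
  finally have Aw: "A *\<^sub>v w = r \<cdot>\<^sub>v w" .
  have w: "w \<in> carrier_vec n" unfolding w_def using u(1) Au by simp
  show ?thesis
  proof (cases "w = 0\<^sub>v n")
    case True
    have "A *\<^sub>v u = (- r) \<cdot>\<^sub>v u"
    proof (rule eq_vecI)
      fix i assume "i < dim_vec ((- r) \<cdot>\<^sub>v u)"
      then have "i < n" using u(1) by simp
      then have "(A *\<^sub>v u) $ i + r * u $ i = 0"
        using arg_cong[OF True, of "\<lambda>x. x $ i"] u(1) Au unfolding w_def by simp
      then show "(A *\<^sub>v u) $ i = ((- r) \<cdot>\<^sub>v u) $ i"
        using \<open>i < n\<close> u(1) by (simp add: eq_neg_iff_add_eq_0)
    qed (use A u(1) in simp)
    then have "eigenvector A u (- r)" unfolding eigenvector_def using A u by simp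
    then show ?thesis unfolding eigenvalue_def by blast
  next
    case False
    then have "eigenvector A w r" unfolding eigenvector_def using A w Aw by simp
    then show ?thesis unfolding eigenvalue_def by blast
  qed
qed

lemma spectral_radius_nonneg:
  assumes "A \<in> carrier_mat n n" "0 < n"
  shows "0 \<le> spectral_radius A"
proof -
  obtain k :: complex where "spectral_radius A = norm k"
    using spectral_radius_mem_max(1)[OF assms] by auto
  then show ?thesis by simp
qed

lemma spectral_radius_mult_comm:
  fixes A B :: "complex mat"
  assumes A: "A \<in> carrier_mat a b" and B: "B \<in> carrier_mat b a" and "0 < a" "0 < b"
  shows "spectral_radius (A * B) = spectral_radius (B * A)"
proof -
  have "spectral_radius (C * D) \<le> spectral_radius (D * C)"
    if C: "C \<in> carrier_mat c d" and D: "D \<in> carrier_mat d c" and "0 < c" "0 < d"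
    for C D :: "complex mat" and c d
  proof -
    have CD: "C * D \<in> carrier_mat c c" and DC: "D * C \<in> carrier_mat d d" using C D by auto
    obtain k where k: "k \<in> spectrum (C * D)" "spectral_radius (C * D) = norm k"
      using spectral_radius_mem_max(1)[OF CD \<open>0 < c\<close>] by auto
    show ?thesis
    proof (cases "k = 0")
      case True
      then show ?thesis using k spectral_radius_nonneg[OF DC \<open>0 < d\<close>] by simp
    next
      case False
      then have "k \<in> spectrum (D * C)"
        using eigenvalue_mult_swap[OF C D] k(1) unfolding spectrum_def by auto
      then show ?thesis using k spectral_radius_mem_max(2)[OF DC \<open>0 < d\<close>] by auto
    qed
  qed
  from this[OF A B] this[OF B A] assms show ?thesis by fastforce
qed

lemma spectral_radius_square:
  fixes A :: "complex mat"
  assumes A: "A \<in> carrier_mat n n" and "0 < n"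
  shows "spectral_radius (A * A) = (spectral_radius A)\<^sup>2"
proof (rule antisym)
  have AA: "A * A \<in> carrier_mat n n" using A by simp
  obtain \<mu> where \<mu>: "\<mu> \<in> spectrum (A * A)" "spectral_radius (A * A) = norm \<mu>"
    using spectral_radius_mem_max(1)[OF AA \<open>0 < n\<close>] by auto
  define r where "r = csqrt \<mu>"
  have "r * r = \<mu>" unfolding r_def by (metis power2_csqrt power2_eq_square)
  then have "eigenvalue A r \<or> eigenvalue A (- r)"
    using eigenvalue_square_root[OF A] \<mu>(1) unfolding spectrum_def by auto
  then have "norm r \<le> spectral_radius A"
    using spectral_radius_mem_max(2)[OF A \<open>0 < n\<close>] unfolding spectrum_def by force
  then have "norm r ^ 2 \<le> (spectral_radius A)\<^sup>2" by (simp add: power_mono)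
  then show "spectral_radius (A * A) \<le> (spectral_radius A)\<^sup>2"
    using \<mu>(2) \<open>r * r = \<mu>\<close> by (metis norm_mult power2_eq_square)
next
  obtain k where k: "k \<in> spectrum A" "spectral_radius A = norm k"
    using spectral_radius_mem_max(1)[OF A \<open>0 < n\<close>] by auto
  then obtain v where v: "v \<in> carrier_vec n" "v \<noteq> 0\<^sub>v n" "A *\<^sub>v v = k \<cdot>\<^sub>v v"
    using A unfolding spectrum_def eigenvalue_def eigenvector_def by auto
  then have "(A * A) *\<^sub>v v = (k * k) \<cdot>\<^sub>v v"
    using A by (simp add: assoc_mult_mat_vec mult_mat_vec smult_smult_assoc)
  then have "k * k \<in> spectrum (A * A)"
    using A v unfolding spectrum_def eigenvalue_def eigenvector_def by auto
  then have "norm (k * k) \<le> spectral_radius (A * A)"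
    using spectral_radius_mem_max(2)[of "A * A" n] A \<open>0 < n\<close> by simp
  then show "(spectral_radius A)\<^sup>2 \<le> spectral_radius (A * A)"
    using k(2) by (simp add: norm_mult power2_eq_square)
qed

lemma sigma_max_eq_sqrt_spectral_radius:
  fixes G :: "complex mat"
  assumes G: "G \<in> carrier_mat a b" and "0 < b"
  shows "sigma_max G = sqrt (spectral_radius (mat_adjoint G * G))"
proof -
  let ?H = "mat_adjoint G * G"
  have H: "?H \<in> carrier_mat b b" by (rule mat_adjoint_mult_self_carrier[OF G])
  have "Re k = norm k" if "eigenvalue ?H k" for k
    using eigenvalue_gram_nonneg[OF G that] by (simp add: cmod_eq_Re)
  then have "{sqrt (Re k) |k. eigenvalue ?H k} = sqrt ` norm ` spectrum ?H"
    unfolding spectrum_def by force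
  moreover have "mono sqrt" by (rule monoI) simp
  ultimately show ?thesis
    unfolding sigma_max_def spectral_radius_def
    using mono_Max_commute[of sqrt "norm ` spectrum ?H"] card_finite_spectrum(1)[OF H]
      spectrum_non_empty[OF H \<open>0 < b\<close>] by simp
qed

lemma sigma_max_nonneg:
  fixes G :: "complex mat"
  assumes G: "G \<in> carrier_mat a b" and "0 < b"
  shows "0 \<le> sigma_max G"
proof -
  from spectral_radius_nonneg[OF mat_adjoint_mult_self_carrier[OF G] \<open>0 < b\<close>] show ?thesis
    unfolding sigma_max_eq_sqrt_spectral_radius[OF G \<open>0 < b\<close>] by simp
qed

lemma sigma_max_squared:
  fixes G :: "complex mat"
  assumes G: "G \<in> carrier_mat a b" and "0 < a" "0 < b"
  shows "(sigma_max G)\<^sup>2 = spectral_radius (G * mat_adjoint G)"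
proof -
  have "spectral_radius (mat_adjoint G * G) = spectral_radius (G * mat_adjoint G)"
    using spectral_radius_mult_comm[of "mat_adjoint G" b a G] G assms by simp
  moreover have "0 \<le> spectral_radius (mat_adjoint G * G)"
    by (rule spectral_radius_nonneg[OF mat_adjoint_mult_self_carrier[OF G] \<open>0 < b\<close>])
  ultimately show ?thesis using sigma_max_eq_sqrt_spectral_radius[OF G \<open>0 < b\<close>] by simp
qed

lemma sigma_max_gram:
  fixes G :: "complex mat"
  assumes G: "G \<in> carrier_mat a b" and "0 < a" "0 < b"
  shows "sigma_max (G * mat_adjoint G) = spectral_radius (G * mat_adjoint G)"
proof -
  let ?H = "G * mat_adjoint G"
  have H: "?H \<in> carrier_mat a a" by (rule mult_mat_adjoint_self_carrier[OF G])
  have adj_H: "mat_adjoint ?H = ?H" using G by (simp add: mat_adjoint_mult)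
  have "(sigma_max ?H)\<^sup>2 = spectral_radius (?H * ?H)"
    using sigma_max_squared[OF H \<open>0 < a\<close> \<open>0 < a\<close>] adj_H by simp
  also have "\<dots> = (spectral_radius ?H)\<^sup>2"
    by (rule spectral_radius_square[OF H \<open>0 < a\<close>])
  finally have "(sigma_max ?H)\<^sup>2 = (spectral_radius ?H)\<^sup>2" .
  moreover have "0 \<le> spectral_radius ?H" by (rule spectral_radius_nonneg[OF H \<open>0 < a\<close>])
  moreover have "0 \<le> sigma_max ?H" by (rule sigma_max_nonneg[OF H \<open>0 < a\<close>])
  ultimately show ?thesis by (simp add: power2_eq_iff_nonneg)
qed

section \<open>A Rayleigh-quotient bound\<close>

lemma pow_mat_add:
  fixes A :: "'a :: semiring_1 mat"
  assumes A: "A \<in> carrier_mat n n"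
  shows "A ^\<^sub>m (s + t) = A ^\<^sub>m s * A ^\<^sub>m t"
proof (induction t)
  case 0
  then show ?case using A by (simp add: right_mult_one_mat[of _ n n])
next
  case (Suc t)
  have "A ^\<^sub>m (s + Suc t) = (A ^\<^sub>m s * A ^\<^sub>m t) * A" using Suc by simp
  also have "\<dots> = A ^\<^sub>m s * (A ^\<^sub>m t * A)"
    using A by (intro assoc_mult_mat[of _ n n _ n _ n]) auto
  finally show ?case by simp
qed

lemma mat_adjoint_pow:
  fixes A :: "complex mat"
  assumes A: "A \<in> carrier_mat n n" and "mat_adjoint A = A"
  shows "mat_adjoint (A ^\<^sub>m t) = A ^\<^sub>m t"
proof (induction t)
  case 0
  then show ?case by simp
next
  case (Suc t)
  have "A ^\<^sub>m 1 = A" using A by (simp add: left_mult_one_mat[of _ n n])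
  then have "A * A ^\<^sub>m t = A ^\<^sub>m t * A"
    using pow_mat_add[OF A, of 1 t] pow_mat_add[OF A, of t 1] by (simp add: add.commute)
  moreover have "mat_adjoint (A ^\<^sub>m t * A) = mat_adjoint A * mat_adjoint (A ^\<^sub>m t)"
    using A by (simp add: mat_adjoint_mult)
  ultimately show ?case using Suc \<open>mat_adjoint A = A\<close> by simp
qed

lemma smult_mat_mult_vec:
  fixes A :: "'a :: semiring_0 mat"
  shows "v \<in> carrier_vec (dim_col A) \<Longrightarrow> (c \<cdot>\<^sub>m A) *\<^sub>v v = c \<cdot>\<^sub>v (A *\<^sub>v v)"
  by (intro eq_vecI) (auto simp: scalar_prod_def sum_distrib_left mult.assoc)

lemma spectral_radius_smult_ge:
  fixes A :: "complex mat"
  assumes A: "A \<in> carrier_mat n n" and "0 < n" "0 \<le> c"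
  shows "c * spectral_radius A \<le> spectral_radius (complex_of_real c \<cdot>\<^sub>m A)"
proof -
  obtain k where k: "k \<in> spectrum A" "spectral_radius A = norm k"
    using spectral_radius_mem_max(1)[OF A \<open>0 < n\<close>] by auto
  then obtain v where v: "v \<in> carrier_vec n" "v \<noteq> 0\<^sub>v n" "A *\<^sub>v v = k \<cdot>\<^sub>v v"
    using A unfolding spectrum_def eigenvalue_def eigenvector_def by auto
  then have "(complex_of_real c \<cdot>\<^sub>m A) *\<^sub>v v = (complex_of_real c * k) \<cdot>\<^sub>v v"
    using A by (simp add: smult_mat_mult_vec smult_smult_assoc)
  then have "complex_of_real c * k \<in> spectrum (complex_of_real c \<cdot>\<^sub>m A)"
    using A v unfolding spectrum_def eigenvalue_def eigenvector_def by auto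
  then have "norm (complex_of_real c * k) \<le> spectral_radius (complex_of_real c \<cdot>\<^sub>m A)"
    using spectral_radius_mem_max(2)[of "complex_of_real c \<cdot>\<^sub>m A" n] A \<open>0 < n\<close> by simp
  then show ?thesis using \<open>0 \<le> c\<close> k(2) by (simp add: norm_mult)
qed

lemma norm_bound_quadratic_form:
  fixes M :: "complex mat"
  assumes M: "M \<in> carrier_mat a a" and "norm_bound M C" and u: "u \<in> carrier_vec a"
  shows "norm ((M *\<^sub>v u) \<bullet>c u) \<le> C * (\<Sum>i<a. cmod (u $ i))\<^sup>2"
proof -
  have entry: "norm (M $$ (i, j)) \<le> C" if "i < a" "j < a" for i j
    using assms that unfolding norm_bound_def by auto
  have "(M *\<^sub>v u) \<bullet>c u = (\<Sum>i<a. (\<Sum>j<a. M $$ (i, j) * u $ j) * cnj (u $ i))"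
    using M u by (auto simp: scalar_prod_def atLeast0LessThan intro!: sum.cong)
  also have "norm \<dots> \<le> (\<Sum>i<a. (\<Sum>j<a. norm (M $$ (i, j)) * cmod (u $ j)) * cmod (u $ i))"
    by (rule order.trans[OF norm_sum sum_mono])
      (auto simp: norm_mult intro!: mult_right_mono order.trans[OF norm_sum])
  also have "\<dots> \<le> (\<Sum>i<a. (\<Sum>j<a. C * cmod (u $ j)) * cmod (u $ i))"
    by (intro sum_mono mult_right_mono) (auto intro: entry)
  also have "\<dots> = C * (\<Sum>i<a. cmod (u $ i))\<^sup>2"
    by (simp add: power2_eq_square sum_distrib_left sum_distrib_right mult.assoc)
  finally show ?thesis .
qed

lemma Re_inner_Cauchy_Schwarz:
  fixes y u :: "complex vec"
  assumes y: "y \<in> carrier_vec a" and u: "u \<in> carrier_vec a"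
  shows "(Re (y \<bullet>c u))\<^sup>2 \<le> Re (y \<bullet>c y) * Re (u \<bullet>c u)"
proof (cases "u = 0\<^sub>v a")
  case True
  then show ?thesis using y by simp
next
  case False
  define s where "s = Re (u \<bullet>c u)"
  define \<alpha> where "\<alpha> = Re (y \<bullet>c u) / s"
  have "0 < s" unfolding s_def by (rule inner_self_Re_pos[OF u False])
  have "Re (y \<bullet>c y) - 2 * \<alpha> * Re (y \<bullet>c u) + \<alpha>\<^sup>2 * s =
    (\<Sum>i<a. (Re (y $ i) - \<alpha> * Re (u $ i))\<^sup>2 + (Im (y $ i) - \<alpha> * Im (u $ i))\<^sup>2)"
    unfolding s_def using y u
    by (simp add: scalar_prod_def atLeast0LessThan Re_sum sum_distrib_left sum_subtractf
        sum.distrib power2_eq_square algebra_simps)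
  also have "\<dots> \<ge> 0" by (intro sum_nonneg) simp
  finally have "0 \<le> Re (y \<bullet>c y) - (Re (y \<bullet>c u))\<^sup>2 / s"
    using \<open>0 < s\<close> unfolding \<alpha>_def by (simp add: power2_eq_square field_simps)
  then show ?thesis using \<open>0 < s\<close> unfolding s_def by (simp add: field_simps)
qed

lemma hermitian_quadratic_form_pow_double:
  fixes A :: "complex mat"
  assumes A: "A \<in> carrier_mat a a" and "mat_adjoint A = A" and u: "u \<in> carrier_vec a"
  shows "(Re ((A ^\<^sub>m t *\<^sub>v u) \<bullet>c u))\<^sup>2 \<le> Re ((A ^\<^sub>m (2 * t) *\<^sub>v u) \<bullet>c u) * Re (u \<bullet>c u)"
proof -
  have At: "A ^\<^sub>m t \<in> carrier_mat a a" using A by simp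
  have y: "A ^\<^sub>m t *\<^sub>v u \<in> carrier_vec a" using At u by simp
  have "(A ^\<^sub>m t *\<^sub>v u) \<bullet>c (A ^\<^sub>m t *\<^sub>v u) = u \<bullet>c (A ^\<^sub>m t *\<^sub>v (A ^\<^sub>m t *\<^sub>v u))"
    using mat_adjoint_inner[OF At u y] mat_adjoint_pow[OF assms(1,2)] by simp
  also have "\<dots> = u \<bullet>c (A ^\<^sub>m (2 * t) *\<^sub>v u)"
    using pow_mat_add[OF A, of t t] At u by (simp add: mult_2 assoc_mult_mat_vec)
  also have "\<dots> = cnj ((A ^\<^sub>m (2 * t) *\<^sub>v u) \<bullet>c u)"
    by (rule inner_commute_cnj[of _ a])
      (use mult_mat_vec_carrier[OF pow_carrier_mat[OF A] u] u in simp_all)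
  finally have "Re ((A ^\<^sub>m t *\<^sub>v u) \<bullet>c (A ^\<^sub>m t *\<^sub>v u)) = Re ((A ^\<^sub>m (2 * t) *\<^sub>v u) \<bullet>c u)"
    by simp
  with Re_inner_Cauchy_Schwarz[OF y u] show ?thesis by simp
qed

text \<open>This replaces the spectral theorem: if the Rayleigh quotient \<open>p t\<close> of \<open>A ^ t\<close> at \<open>u\<close> had
  \<open>p 1 > 1\<close>, Cauchy-Schwarz would give \<open>p (2 t) \<ge> (p t)\<^sup>2\<close>, so \<open>p\<close> would be unbounded,
  whereas spectral radius below 1 keeps the powers of \<open>A\<close> bounded.\<close>

lemma hermitian_quadratic_form_le_inner_self:
  fixes A :: "complex mat"
  assumes A: "A \<in> carrier_mat a a" and adj_A: "mat_adjoint A = A"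
    and "spectral_radius A < 1" and u: "u \<in> carrier_vec a"
  shows "Re ((A *\<^sub>v u) \<bullet>c u) \<le> Re (u \<bullet>c u)"
proof (rule ccontr)
  define s where "s = Re (u \<bullet>c u)"
  define p where "p t = Re ((A ^\<^sub>m t *\<^sub>v u) \<bullet>c u) / s" for t
  assume "\<not> ?thesis"
  then have gt: "s < Re ((A *\<^sub>v u) \<bullet>c u)" unfolding s_def by simp
  then have "u \<noteq> 0\<^sub>v a" using A unfolding s_def by auto
  then have "0 < s" unfolding s_def by (rule inner_self_Re_pos[OF u])
  have "A ^\<^sub>m 1 = A" using A by (simp add: left_mult_one_mat[of _ a a])
  then have p1: "1 < p 1" unfolding p_def using gt \<open>0 < s\<close> by simp
  obtain C where C: "\<And>t. norm_bound (A ^\<^sub>m t) C"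
    using spectral_radius_jnf_norm_bound_less_1_upper_triangular[OF A \<open>spectral_radius A < 1\<close>]
    by auto
  define U where "U = (\<Sum>i<a. cmod (u $ i))"
  have p_bounded: "p t \<le> C * U\<^sup>2 / s" for t
  proof -
    have "Re ((A ^\<^sub>m t *\<^sub>v u) \<bullet>c u) \<le> C * U\<^sup>2"
      unfolding U_def using complex_Re_le_cmod norm_bound_quadratic_form[OF _ C u] A
      by (meson order.trans pow_carrier_mat)
    then show ?thesis unfolding p_def using \<open>0 < s\<close> by (simp add: divide_right_mono)
  qed
  have p_double: "(p t)\<^sup>2 \<le> p (2 * t)" for t
    using hermitian_quadratic_form_pow_double[OF A adj_A u, of t] \<open>0 < s\<close>
    unfolding p_def s_def[symmetric] by (simp add: power2_eq_square field_simps)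
  have p_pow: "p 1 ^ (2 ^ j) \<le> p (2 ^ j)" for j
  proof (induction j)
    case (Suc j)
    have "p 1 ^ (2 ^ Suc j) = (p 1 ^ (2 ^ j))\<^sup>2" by (simp add: power_mult[symmetric] mult.commute)
    also have "\<dots> \<le> (p (2 ^ j))\<^sup>2" using Suc p1 by (intro power_mono) auto
    also have "\<dots> \<le> p (2 ^ Suc j)" using p_double by simp
    finally show ?case .
  qed simp
  obtain j where j: "C * U\<^sup>2 / s < p 1 ^ j" using real_arch_pow[OF p1] by blast
  have "p 1 ^ j \<le> p 1 ^ (2 ^ j)"
    using p1 by (intro power_increasing) (auto intro: less_imp_le less_exp)
  also have "\<dots> \<le> C * U\<^sup>2 / s" using p_pow p_bounded order.trans by blast
  finally show False using j by simp
qed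

lemma hermitian_quadratic_form_le_spectral_radius:
  fixes H :: "complex mat"
  assumes H: "H \<in> carrier_mat a a" and adj_H: "mat_adjoint H = H" and "0 < a"
    and u: "u \<in> carrier_vec a"
  shows "Re ((H *\<^sub>v u) \<bullet>c u) \<le> spectral_radius H * Re (u \<bullet>c u)"
proof (rule ccontr)
  define q where "q = Re ((H *\<^sub>v u) \<bullet>c u)"
  define s where "s = Re (u \<bullet>c u)"
  define \<rho> where "\<rho> = spectral_radius H"
  assume "\<not> ?thesis"
  then have q_gt: "\<rho> * s < q" unfolding q_def s_def \<rho>_def by simp
  then have "u \<noteq> 0\<^sub>v a" using H unfolding q_def s_def by auto
  then have "0 < s" unfolding s_def by (rule inner_self_Re_pos[OF u])
  have "0 \<le> \<rho>" unfolding \<rho>_def by (rule spectral_radius_nonneg[OF H \<open>0 < a\<close>])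
  define c where "c = (\<rho> + q / s) / 2"
  have "0 \<le> \<rho> * s" using \<open>0 < s\<close> \<open>0 \<le> \<rho>\<close> by simp
  then have c: "0 < c" "\<rho> < c" "c * s < q"
    using q_gt \<open>0 < s\<close> unfolding c_def by (auto simp: field_simps)
  define A where "A = complex_of_real (1 / c) \<cdot>\<^sub>m H"
  have A: "A \<in> carrier_mat a a" unfolding A_def using H by simp
  have adj_A: "mat_adjoint A = A" unfolding A_def mat_adjoint_smult adj_H by simp
  have "c * spectral_radius A \<le> spectral_radius (complex_of_real c \<cdot>\<^sub>m A)"
    using spectral_radius_smult_ge[OF A \<open>0 < a\<close>] c by simp
  also have "complex_of_real c \<cdot>\<^sub>m A = H"
    unfolding A_def using c by (intro eq_matI) (auto simp: of_real_divide)
  finally have "c * spectral_radius A < c * 1" using c unfolding \<rho>_def by linarith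
  then have "Re ((A *\<^sub>v u) \<bullet>c u) \<le> s"
    unfolding s_def using c by (intro hermitian_quadratic_form_le_inner_self[OF A adj_A _ u]) simp
  moreover have "Re ((A *\<^sub>v u) \<bullet>c u) = q / c"
    unfolding A_def q_def using H u by (simp add: smult_mat_mult_vec)
  ultimately show False using c by (simp add: field_simps)
qed

lemma spectral_radius_gram_le_add:
  fixes G E :: "complex mat"
  assumes G: "G \<in> carrier_mat a b" and E: "E \<in> carrier_mat a c" and "0 < a"
  shows "spectral_radius (G * mat_adjoint G)
    \<le> spectral_radius (G * mat_adjoint G + E * mat_adjoint E)"
proof -
  let ?H = "G * mat_adjoint G" and ?K = "E * mat_adjoint E"
  have H: "?H \<in> carrier_mat a a" by (rule mult_mat_adjoint_self_carrier[OF G])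
  have K: "?K \<in> carrier_mat a a" by (rule mult_mat_adjoint_self_carrier[OF E])
  have HK: "?H + ?K \<in> carrier_mat a a" using H K by simp
  have adj_HK: "mat_adjoint (?H + ?K) = ?H + ?K"
    using H K G E by (simp add: mat_adjoint_add[of _ a a] mat_adjoint_mult)
  obtain k where k: "k \<in> spectrum ?H" "spectral_radius ?H = norm k"
    using spectral_radius_mem_max(1)[OF H \<open>0 < a\<close>] by auto
  then obtain u where u: "u \<in> carrier_vec a" "u \<noteq> 0\<^sub>v a" "?H *\<^sub>v u = k \<cdot>\<^sub>v u"
    using H unfolding spectrum_def eigenvalue_def eigenvector_def by auto
  have "Im k = 0" "0 \<le> Re k"
    using eigenvalue_gram_nonneg[of "mat_adjoint G" b a k] G k(1) unfolding spectrum_def by auto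
  then have norm_k: "norm k = Re k" by (simp add: cmod_eq_Re)
  define s where "s = Re (u \<bullet>c u)"
  have "0 < s" unfolding s_def by (rule inner_self_Re_pos[OF u(1,2)])
  have "(?K *\<^sub>v u) \<bullet>c u = (mat_adjoint E *\<^sub>v u) \<bullet>c (mat_adjoint E *\<^sub>v u)"
    using inner_gram[OF mat_adjoint_carrier[OF E] u(1)] by simp
  then have "0 \<le> Re ((?K *\<^sub>v u) \<bullet>c u)" using inner_self_real(2) by simp
  moreover have "((?H + ?K) *\<^sub>v u) \<bullet>c u = (?H *\<^sub>v u) \<bullet>c u + (?K *\<^sub>v u) \<bullet>c u"
    using H K u by (simp add: add_mult_distrib_mat_vec add_scalar_prod_distrib[of _ a])
  moreover have "Re ((?H *\<^sub>v u) \<bullet>c u) = norm k * s"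
    unfolding u(3) s_def norm_k using u(1) inner_self_real(1)[of u] by simp
  ultimately have "norm k * s \<le> Re (((?H + ?K) *\<^sub>v u) \<bullet>c u)" by simp
  also have "\<dots> \<le> spectral_radius (?H + ?K) * s"
    unfolding s_def by (rule hermitian_quadratic_form_le_spectral_radius[OF HK adj_HK \<open>0 < a\<close> u(1)])
  finally show ?thesis using k(2) \<open>0 < s\<close> by simp
qed

lemma mult_assoc_dim:
  "dim_col A = dim_row B \<Longrightarrow> dim_col B = dim_row C \<Longrightarrow>
    A * B * C = A * (B * (C :: 'a :: semiring_0 mat))"
  by (rule assoc_mult_mat[of A "dim_row A" "dim_col A" B "dim_col B" C "dim_col C"]) auto

lemma transpose_mult_dim:
  "dim_col A = dim_row B \<Longrightarrow>
    transpose_mat (A * B) = transpose_mat B * transpose_mat (A :: 'a :: comm_semiring_0 mat)"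
  by (rule transpose_mult[of A "dim_row A" "dim_col A" B "dim_col B"]) auto

lemma smult_mult_dim:
  "dim_col A = dim_row B \<Longrightarrow> (c \<cdot>\<^sub>m A) * B = c \<cdot>\<^sub>m (A * (B :: 'a :: comm_semiring_0 mat))"
  by (rule mult_smult_assoc_mat[of A "dim_row A" "dim_col A" B "dim_col B"]) auto

lemma mult_smult_dim:
  "dim_col A = dim_row B \<Longrightarrow> A * (c \<cdot>\<^sub>m B) = c \<cdot>\<^sub>m (A * (B :: 'a :: comm_semiring_0 mat))"
  by (rule mult_smult_distrib[of A "dim_row A" "dim_col A" B "dim_col B"]) auto

lemma mult_add_distrib_dim:
  "dim_col A = dim_row B \<Longrightarrow> dim_row B = dim_row C \<Longrightarrow> dim_col B = dim_col C \<Longrightarrow>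
    A * (B + C) = A * B + A * (C :: 'a :: semiring_0 mat)"
  by (rule mult_add_distrib_mat[of A "dim_row A" "dim_col A" B "dim_col B"]) auto

lemma add_mult_distrib_dim:
  "dim_row A = dim_row B \<Longrightarrow> dim_col A = dim_col B \<Longrightarrow> dim_col A = dim_row C \<Longrightarrow>
    (A + B) * C = A * C + B * (C :: 'a :: semiring_0 mat)"
  by (rule add_mult_distrib_mat[of A "dim_row A" "dim_col A" B C "dim_col C"]) auto

lemmas mat_ring_dim_simps =
  mult_assoc_dim smult_mult_dim mult_smult_dim mult_add_distrib_dim add_mult_distrib_dim

lemma mult_inverse_cancel_left:
  "A * B = 1\<^sub>m k \<Longrightarrow> dim_col A = dim_row B \<Longrightarrow> dim_col B = dim_row C \<Longrightarrow> dim_row C = k \<Longrightarrow>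
    A * (B * C) = (C :: 'a :: semiring_1 mat)"
  by (subst mult_assoc_dim[symmetric]) auto

lemma transpose_smult_mat: "transpose_mat (c \<cdot>\<^sub>m A) = c \<cdot>\<^sub>m transpose_mat A"
  by (intro eq_matI) auto

lemma smult_smult_mat: "a \<cdot>\<^sub>m (b \<cdot>\<^sub>m A) = (a * b :: 'a :: semigroup_mult) \<cdot>\<^sub>m A"
  by (intro eq_matI) (auto simp: mult.assoc)

lemma transpose_mat_diag [simp]: "transpose_mat (mat_diag n f) = mat_diag n f"
  unfolding mat_diag_def by (intro eq_matI) auto

lemma hcat_carrier: "A \<in> carrier_mat r a \<Longrightarrow> B \<in> carrier_mat r b \<Longrightarrow> hcat A B \<in> carrier_mat r (a + b)"
  unfolding hcat_def by auto

lemma hcat_mult_transpose: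
  fixes A B :: "'a :: comm_ring_1 mat"
  assumes A: "A \<in> carrier_mat r a" and B: "B \<in> carrier_mat r b"
  shows "hcat A B * transpose_mat (hcat A B) = A * transpose_mat A + B * transpose_mat B"
proof (rule eq_matI)
  have d: "dim_row A = r" "dim_col A = a" "dim_row B = r" "dim_col B = b" using A B by auto
  fix i j assume "i < dim_row (A * transpose_mat A + B * transpose_mat B)"
    "j < dim_col (A * transpose_mat A + B * transpose_mat B)"
  then have i: "i < r" and j: "j < r" using d by auto
  let ?H = "hcat A B"
  have "(?H * transpose_mat ?H) $$ (i, j) = (\<Sum>k\<in>{0..<a+b}. ?H $$ (i,k) * ?H $$ (j,k))"
    using i j d unfolding hcat_def by (simp add: scalar_prod_def)
  also have "\<dots> = (\<Sum>k\<in>{0..<a}. ?H $$ (i,k) * ?H $$ (j,k))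
      + (\<Sum>k\<in>{a..<a+b}. ?H $$ (i,k) * ?H $$ (j,k))"
    by (rule sum.atLeastLessThan_concat[symmetric]) auto
  also have "(\<Sum>k\<in>{0..<a}. ?H $$ (i,k) * ?H $$ (j,k)) = (\<Sum>k\<in>{0..<a}. A $$ (i,k) * A $$ (j,k))"
    using i j d unfolding hcat_def by (intro sum.cong) auto
  also have "(\<Sum>k\<in>{a..<a+b}. ?H $$ (i,k) * ?H $$ (j,k))
      = (\<Sum>k\<in>{0..<b}. ?H $$ (i,k+a) * ?H $$ (j,k+a))"
    using sum.shift_bounds_nat_ivl[of "\<lambda>k. ?H $$ (i,k) * ?H $$ (j,k)" 0 a b]
    by (simp add: add.commute)
  also have "\<dots> = (\<Sum>k\<in>{0..<b}. B $$ (i,k) * B $$ (j,k))"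
    using i j d unfolding hcat_def by (intro sum.cong) auto
  finally show "(?H * transpose_mat ?H) $$ (i, j)
      = (A * transpose_mat A + B * transpose_mat B) $$ (i, j)"
    using i j d by (simp add: scalar_prod_def)
qed (use A B in \<open>auto simp: hcat_def\<close>)

lemma mat_diag_mult_vec:
  assumes "v \<in> carrier_vec n" "i < n"
  shows "(mat_diag n f *\<^sub>v v) $ i = f i * v $ i"
proof -
  have "(mat_diag n f *\<^sub>v v) $ i = (\<Sum>j\<in>{0..<n}. (if i = j then f j else 0) * v $ j)"
    using assms unfolding mat_diag_def by (simp add: scalar_prod_def)
  also have "\<dots> = (\<Sum>j\<in>{0..<n}. if j = i then f j * v $ j else 0)"
    by (intro sum.cong) auto
  finally show ?thesis using assms(2) by simp
qed

lemma inj_mat_mat_diag: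
  fixes f :: "nat \<Rightarrow> 'a :: field"
  assumes "\<And>i. i < n \<Longrightarrow> f i \<noteq> 0"
  shows "inj_mat (mat_diag n f)"
proof (rule inj_matI[OF mat_diag_dim])
  fix v :: "'a vec" assume v: "v \<in> carrier_vec n" and "mat_diag n f *\<^sub>v v = 0\<^sub>v n"
  then have "f i * v $ i = 0" if "i < n" for i
    using mat_diag_mult_vec[OF v that, of f] that by simp
  then show "v = 0\<^sub>v n" using assms v by (auto simp: vec_eq_iff)
qed

lemma inj_mat_transpose_hcat_one:
  fixes T :: "'a :: comm_ring_1 mat"
  assumes T: "T \<in> carrier_mat k l"
  shows "inj_mat (transpose_mat (hcat (1\<^sub>m k) T))"
proof (rule inj_matI)
  show "transpose_mat (hcat (1\<^sub>m k) T) \<in> carrier_mat (k + l) k"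
    using hcat_carrier[OF one_carrier_mat T] by simp
  fix x :: "'a vec"
  assume x: "x \<in> carrier_vec k" and "transpose_mat (hcat (1\<^sub>m k) T) *\<^sub>v x = 0\<^sub>v (k + l)"
  moreover have "(transpose_mat (hcat (1\<^sub>m k) T) *\<^sub>v x) $ i = x $ i" if "i < k" for i
  proof -
    have "(transpose_mat (hcat (1\<^sub>m k) T) *\<^sub>v x) $ i
        = (\<Sum>j\<in>{0..<k}. (if j = i then 1 else 0) * x $ j)"
      using x T that unfolding hcat_def by (simp add: scalar_prod_def)
    also have "\<dots> = (\<Sum>j\<in>{0..<k}. if j = i then x $ j else 0)"
      by (intro sum.cong) auto
    finally show ?thesis using that by simp
  qed
  ultimately show "x = 0\<^sub>v k" by (auto simp: vec_eq_iff)
qed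

section \<open>Incidence matrix of a spanning tree\<close>

lemma D_tau_index:
  assumes "n - 1 \<le> m" "i < n" "e < n - 1"
  shows "D_tau n m src tgt $$ (i, e) = (if i = src e then 1 else if i = tgt e then -1 else 0)"
  using assms unfolding D_tau_def incidence_def by simp

lemma D_tau_carrier: "D_tau n m src tgt \<in> carrier_mat n (n - 1)"
  unfolding D_tau_def by simp

text \<open>Deleting a tree edge \<open>l\<close> splits the tree; summing the rows of \<open>D_tau x\<close> over the
  component of \<open>src l\<close> cancels every edge except \<open>l\<close> and leaves \<open>x $ l\<close>.\<close>

lemma inj_mat_D_tau:
  assumes valid: "valid_graph n m src tgt" and "n - 1 \<le> m"
    and tree: "spanning_tree n src tgt {..<n - 1}"
  shows "inj_mat (D_tau n m src tgt)"
proof (rule inj_matI[OF D_tau_carrier])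
  define N where "N = n - 1"
  fix x assume x: "x \<in> carrier_vec (n - 1)" and Dx0: "D_tau n m src tgt *\<^sub>v x = 0\<^sub>v n"
  have edge: "src e < n" "tgt e < n" "src e \<noteq> tgt e" if "e < N" for e
    using valid that \<open>n - 1 \<le> m\<close> unfolding valid_graph_def N_def by auto
  have Dx: "(D_tau n m src tgt *\<^sub>v x) $ i =
      (\<Sum>e<N. ((if i = src e then 1 else 0) - (if i = tgt e then 1 else 0)) * x $ e)" if "i < n" for i
    using that x \<open>n - 1 \<le> m\<close> D_tau_carrier[of n m src tgt] edge(3)
    by (auto simp: scalar_prod_def atLeast0LessThan D_tau_index N_def intro!: sum.cong)
  have "x $ l = 0" if l: "l < N" for l
  proof -
    define C where "C = {i. i < n \<and> (src l, i) \<in> (adj_in src tgt ({..<N} - {l}))\<^sup>*}"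
    have "src l \<in> C" unfolding C_def using edge(1)[OF l] by simp
    moreover have "tgt l \<notin> C" using tree l unfolding C_def spanning_tree_def N_def by auto
    moreover have "src e \<in> C \<longleftrightarrow> tgt e \<in> C" if e: "e < N" "e \<noteq> l" for e
    proof -
      have "(src e, tgt e) \<in> adj_in src tgt ({..<N} - {l})"
        "(tgt e, src e) \<in> adj_in src tgt ({..<N} - {l})"
        unfolding adj_in_def using e by auto
      then show ?thesis unfolding C_def using edge[OF e(1)] by (auto intro: rtrancl_into_rtrancl)
    qed
    ultimately have signs: "(if src e \<in> C then 1 else 0) - (if tgt e \<in> C then 1 else (0::real)) =
        (if e = l then 1 else 0)" if "e < N" for e
      using that by auto
    have "0 = (\<Sum>i\<in>C. (D_tau n m src tgt *\<^sub>v x) $ i)" using Dx0 by (simp add: C_def)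
    also have "\<dots> =
        (\<Sum>e<N. \<Sum>i\<in>C. ((if i = src e then 1 else 0) - (if i = tgt e then 1 else 0)) * x $ e)"
      by (subst sum.swap) (auto simp: Dx C_def intro!: sum.cong)
    also have "\<dots> = (\<Sum>e<N. ((if src e \<in> C then 1 else 0) - (if tgt e \<in> C then 1 else 0)) * x $ e)"
      by (intro sum.cong refl) (simp add: sum_distrib_right[symmetric] sum_subtractf C_def)
    also have "\<dots> = (\<Sum>e<N. if e = l then x $ e else 0)"
      by (intro sum.cong) (auto simp: signs)
    also have "\<dots> = x $ l" using l by simp
    finally show ?thesis by simp
  qed
  then show "x = 0\<^sub>v (n - 1)" using x by (auto simp: vec_eq_iff N_def)
qed

section \<open>Resolvents of products of Gram matrices\<close>

lemma inj_mat_imag_shift_gram_mult: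
  fixes F G :: "complex mat"
  assumes F: "F \<in> carrier_mat a k" and G: "G \<in> carrier_mat b k"
    and inj_F: "inj_mat F" and inj_G: "inj_mat G"
  shows "inj_mat ((\<i> * complex_of_real \<omega>) \<cdot>\<^sub>m 1\<^sub>m k + (mat_adjoint F * F) * (mat_adjoint G * G))"
proof (rule inj_matI)
  let ?s = "\<i> * complex_of_real \<omega>" and ?L = "mat_adjoint F * F" and ?M = "mat_adjoint G * G"
  have L: "?L \<in> carrier_mat k k" by (rule mat_adjoint_mult_self_carrier[OF F])
  have M: "?M \<in> carrier_mat k k" by (rule mat_adjoint_mult_self_carrier[OF G])
  show "?s \<cdot>\<^sub>m 1\<^sub>m k + ?L * ?M \<in> carrier_mat k k" using L M by simp
  fix v assume v: "v \<in> carrier_vec k" and "(?s \<cdot>\<^sub>m 1\<^sub>m k + ?L * ?M) *\<^sub>v v = 0\<^sub>v k"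
  define y where "y = ?M *\<^sub>v v"
  have y: "y \<in> carrier_vec k" unfolding y_def using M v by simp
  have Ly: "?L *\<^sub>v y \<in> carrier_vec k" using L y by simp
  have "(?s \<cdot>\<^sub>m 1\<^sub>m k + ?L * ?M) *\<^sub>v v = ?s \<cdot>\<^sub>v v + ?L *\<^sub>v y"
    unfolding y_def using L M v
    by (simp add: add_mult_distrib_mat_vec[of _ k k] smult_mat_mult_vec assoc_mult_mat_vec)
  then have "?s \<cdot>\<^sub>v v + ?L *\<^sub>v y = 0\<^sub>v k" using \<open>_ = 0\<^sub>v k\<close> by simp
  then have "?L *\<^sub>v y = (- ?s) \<cdot>\<^sub>v v"
    using v Ly by (auto simp: vec_eq_iff eq_neg_iff_add_eq_0 add.commute)
  then have "(F *\<^sub>v y) \<bullet>c (F *\<^sub>v y) = (- ?s) * (v \<bullet>c y)"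
    using inner_gram[OF F y] v y by simp
  also have "v \<bullet>c y = cnj (y \<bullet>c v)" by (rule inner_commute_cnj[OF y v])
  also have "y \<bullet>c v = complex_of_real (Re ((G *\<^sub>v v) \<bullet>c (G *\<^sub>v v)))"
    unfolding y_def inner_gram[OF G v] by (rule inner_self_real(3))
  finally have "Re ((F *\<^sub>v y) \<bullet>c (F *\<^sub>v y)) = 0" by simp
  then have "y = 0\<^sub>v k"
    using inner_self_Re_eq_0_iff[of "F *\<^sub>v y" a] inj_matD[OF inj_F F y] F y by simp
  then have "Re ((G *\<^sub>v v) \<bullet>c (G *\<^sub>v v)) = 0"
    using inner_gram[OF G v] v unfolding y_def by simp
  then show "v = 0\<^sub>v k"
    using inner_self_Re_eq_0_iff[of "G *\<^sub>v v" b] inj_matD[OF inj_G G v] G v by simp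
qed

lemma imag_shift_congruence:
  fixes A X :: "complex mat"
  assumes A: "A \<in> carrier_mat k k" and X: "X \<in> carrier_mat k k"
    and comm: "A * X = X * mat_adjoint A"
  shows "((\<i> * complex_of_real \<omega>) \<cdot>\<^sub>m 1\<^sub>m k + A) * X
      * mat_adjoint ((\<i> * complex_of_real \<omega>) \<cdot>\<^sub>m 1\<^sub>m k + A)
    = complex_of_real (\<omega>\<^sup>2) \<cdot>\<^sub>m X + A * X * mat_adjoint A"
proof -
  let ?s = "\<i> * complex_of_real \<omega>" and ?A' = "mat_adjoint A"
  have d: "dim_row A = k" "dim_col A = k" "dim_row X = k" "dim_col X = k"
    "dim_row ?A' = k" "dim_col ?A' = k"
    using A X by auto
  have "mat_adjoint (?s \<cdot>\<^sub>m 1\<^sub>m k + A) = (- ?s) \<cdot>\<^sub>m 1\<^sub>m k + ?A'"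
    using A by (simp add: mat_adjoint_add[of _ k k] mat_adjoint_smult)
  moreover have "(?s \<cdot>\<^sub>m 1\<^sub>m k + A) * X * ((- ?s) \<cdot>\<^sub>m 1\<^sub>m k + ?A') =
     (- ?s) \<cdot>\<^sub>m (?s \<cdot>\<^sub>m X + X * ?A') + (?s \<cdot>\<^sub>m (X * ?A') + X * (?A' * ?A'))"
    using d comm by (simp add: mat_ring_dim_simps)
  moreover have "\<dots> = complex_of_real (\<omega>\<^sup>2) \<cdot>\<^sub>m X + X * (?A' * ?A')"
    using d by (intro eq_matI) (simp_all add: algebra_simps power2_eq_square)
  moreover have "X * (?A' * ?A') = A * X * ?A'"
    using d comm by (simp add: mult_assoc_dim[symmetric])
  ultimately show ?thesis by simp
qed

lemma resolvent_gram_identity: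
  fixes A X P :: "complex mat"
  assumes A: "A \<in> carrier_mat k k" and X: "X \<in> carrier_mat k k" and P: "P \<in> carrier_mat k k"
    and inv: "P * ((\<i> * complex_of_real \<omega>) \<cdot>\<^sub>m 1\<^sub>m k + A) = 1\<^sub>m k"
    and comm: "A * X = X * mat_adjoint A"
  shows "P * (A * X * mat_adjoint A) * mat_adjoint P
    + complex_of_real (\<omega>\<^sup>2) \<cdot>\<^sub>m (P * X * mat_adjoint P) = X"
proof -
  let ?Q = "(\<i> * complex_of_real \<omega>) \<cdot>\<^sub>m 1\<^sub>m k + A"
  have Q: "?Q \<in> carrier_mat k k" using A by simp
  have inv': "mat_adjoint ?Q * mat_adjoint P = 1\<^sub>m k"
    using arg_cong[OF inv, of mat_adjoint] mat_adjoint_mult[of P ?Q] P A by simp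
  have "P * (A * X * mat_adjoint A) * mat_adjoint P
      + complex_of_real (\<omega>\<^sup>2) \<cdot>\<^sub>m (P * X * mat_adjoint P)
    = P * (?Q * X * mat_adjoint ?Q) * mat_adjoint P"
    unfolding imag_shift_congruence[OF A X comm] using A X P
    by (simp add: mat_ring_dim_simps comm_add_mat[of _ k k])
  also have "\<dots> = (P * ?Q) * (X * (mat_adjoint ?Q * mat_adjoint P))"
    using A X P by (simp add: mat_ring_dim_simps)
  also have "\<dots> = X" unfolding inv inv' using X by simp
  finally show ?thesis .
qed

lemma transpose_congruence_cancel:
  fixes A A' P Q :: "'a :: comm_ring_1 mat"
  assumes A: "A \<in> carrier_mat k k" and A': "A' \<in> carrier_mat k k" and inv: "A' * A = 1\<^sub>m k"
    and P: "P \<in> carrier_mat k k" and Q: "Q \<in> carrier_mat k k"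
    and eq: "A * (P * transpose_mat A) = A * (Q * transpose_mat A)"
  shows "P = Q"
proof -
  have inv': "transpose_mat A * transpose_mat A' = 1\<^sub>m k"
    using arg_cong[OF inv, of transpose_mat] A A' by (simp add: transpose_mult_dim)
  have "C = A' * (A * (C * transpose_mat A)) * transpose_mat A'" if "C \<in> carrier_mat k k" for C
    using that A A' by (simp add: mult_assoc_dim mult_inverse_cancel_left[OF inv]
        mult_assoc_dim[symmetric, of C] inv')
  from this[OF P] this[OF Q] show ?thesis unfolding eq by simp
qed

section \<open>The edge-agreement network\<close>

locale edge_network =
  fixes n m :: nat and src tgt :: "nat \<Rightarrow> nat" and w eps :: "nat \<Rightarrow> real"
    and sw sv :: real
  assumes n_ge_2: "2 \<le> n"
    and valid: "valid_graph n m src tgt"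
    and tree_le: "n - 1 \<le> m"
    and tree: "spanning_tree n src tgt {..<n - 1}"
    and w_pos: "\<forall>l<m. 0 < w l"
    and eps_pos: "\<forall>i<n. 0 < eps i"
begin

definition "N = n - 1"
definition "D = D_tau n m src tgt"
definition "R = R_mat n m src tgt"
definition "W = mat_diag m w"
definition "L = L_es n m src tgt eps"
definition "E_inv_sqrt = mat_diag n (\<lambda>i. 1 / sqrt (eps i))"
definition "W_sqrt = mat_diag m (\<lambda>l. sqrt (w l))"
definition "F_L = E_inv_sqrt * D"
definition "F_M = W_sqrt * transpose_mat R"
definition "M = R * W * transpose_mat R"
definition "S = L * M"
definition "K = M * L * M"
definition "B = hcat (sw \<cdot>\<^sub>m (transpose_mat D * E_inv_sqrt)) ((- sv) \<cdot>\<^sub>m (L * R * W_sqrt))"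
definition "Y = minv S * B"
definition "X = Y * transpose_mat Y"

lemma N_le: "N \<le> m" and m_pos: "0 < m"
  unfolding N_def using n_ge_2 tree_le by auto

lemma R_eq: "R = hcat (1\<^sub>m N) (T_tau_c n m src tgt)"
  unfolding R_def R_mat_def N_def ..

lemma D_carrier: "D \<in> carrier_mat n N"
  unfolding D_def N_def by (rule D_tau_carrier)

lemma T_tau_c_carrier: "T_tau_c n m src tgt \<in> carrier_mat N (m - N)"
proof -
  have "D_c n m src tgt \<in> carrier_mat n (m - N)" unfolding D_c_def N_def by simp
  moreover have "minv (transpose_mat D * D) \<in> carrier_mat N N"
    using D_carrier by (intro minv_carrier mult_carrier_mat[of _ N n]) auto
  ultimately show ?thesis
    unfolding T_tau_c_def D_def[symmetric] using D_carrier
    by (intro mult_carrier_mat[of _ N n] mult_carrier_mat[of _ N N]) auto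
qed

lemma R_carrier: "R \<in> carrier_mat N m"
proof -
  have "R \<in> carrier_mat N (N + (m - N))"
    unfolding R_eq by (intro hcat_carrier one_carrier_mat T_tau_c_carrier)
  then show ?thesis using N_le by simp
qed

lemma carrier [simp, intro]:
  "D \<in> carrier_mat n N" "R \<in> carrier_mat N m" "W \<in> carrier_mat m m" "L \<in> carrier_mat N N"
  "E_inv_sqrt \<in> carrier_mat n n" "W_sqrt \<in> carrier_mat m m" "F_L \<in> carrier_mat n N"
  "F_M \<in> carrier_mat m N" "M \<in> carrier_mat N N" "S \<in> carrier_mat N N" "K \<in> carrier_mat N N"
  "B \<in> carrier_mat N (n + m)"
proof -
  show D: "D \<in> carrier_mat n N" and R: "R \<in> carrier_mat N m" by (fact D_carrier R_carrier)+
  show W: "W \<in> carrier_mat m m" and E: "E_inv_sqrt \<in> carrier_mat n n"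
    and W': "W_sqrt \<in> carrier_mat m m" unfolding W_def E_inv_sqrt_def W_sqrt_def by simp_all
  show L: "L \<in> carrier_mat N N" unfolding L_def L_es_def D_def[symmetric] using D by auto
  show "F_L \<in> carrier_mat n N" "F_M \<in> carrier_mat m N" unfolding F_L_def F_M_def
    using D R E W' by auto
  show M: "M \<in> carrier_mat N N" unfolding M_def using R W by auto
  show "S \<in> carrier_mat N N" "K \<in> carrier_mat N N" unfolding S_def K_def using L M by auto
  show "B \<in> carrier_mat N (n + m)" unfolding B_def using D E L R W' by (intro hcat_carrier) auto
qed

lemma dim [simp]:
  "dim_row D = n" "dim_col D = N" "dim_row R = N" "dim_col R = m" "dim_row W = m" "dim_col W = m"
  "dim_row L = N" "dim_col L = N" "dim_row E_inv_sqrt = n" "dim_col E_inv_sqrt = n"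
  "dim_row W_sqrt = m" "dim_col W_sqrt = m" "dim_row F_L = n" "dim_col F_L = N"
  "dim_row F_M = m" "dim_col F_M = N" "dim_row M = N" "dim_col M = N" "dim_row S = N"
  "dim_col S = N" "dim_row K = N" "dim_col K = N" "dim_row B = N" "dim_col B = n + m"
  using carrier[THEN carrier_matD(1)] carrier[THEN carrier_matD(2)] by simp_all

lemma L_gram: "L = transpose_mat F_L * F_L"
proof -
  have "E_inv_sqrt * E_inv_sqrt = mat_diag n (\<lambda>i. 1 / eps i)"
    unfolding E_inv_sqrt_def mat_diag_diag using eps_pos
    by (intro eq_matI) (auto simp: mat_diag_def real_sqrt_mult[symmetric])
  moreover have "transpose_mat F_L * F_L = transpose_mat D * (E_inv_sqrt * E_inv_sqrt) * D"
    unfolding F_L_def by (simp add: transpose_mult_dim E_inv_sqrt_def[symmetric] mult_assoc_dim)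
      (simp add: E_inv_sqrt_def)
  ultimately show ?thesis unfolding L_def L_es_def D_def by simp
qed

lemma M_gram: "M = transpose_mat F_M * F_M"
proof -
  have "W_sqrt * W_sqrt = W"
    unfolding W_sqrt_def W_def mat_diag_diag using w_pos
    by (intro eq_matI) (auto simp: mat_diag_def real_sqrt_mult[symmetric])
  moreover have "transpose_mat F_M * F_M = R * (W_sqrt * W_sqrt) * transpose_mat R"
    unfolding F_M_def by (simp add: transpose_mult_dim mult_assoc_dim) (simp add: W_sqrt_def)
  ultimately show ?thesis unfolding M_def by simp
qed

lemma L_symmetric: "transpose_mat L = L" and M_symmetric: "transpose_mat M = M"
  unfolding L_gram M_gram by (simp_all add: transpose_mult_dim)

lemma inj_F_L: "inj_mat F_L"
proof -
  have "inj_mat E_inv_sqrt" unfolding E_inv_sqrt_def using eps_pos by (intro inj_mat_mat_diag) auto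
  moreover have "inj_mat D" unfolding D_def by (rule inj_mat_D_tau[OF valid tree_le tree])
  ultimately show ?thesis unfolding F_L_def by (rule inj_mat_mult) auto
qed

lemma inj_F_M: "inj_mat F_M"
proof -
  have "inj_mat W_sqrt" unfolding W_sqrt_def using w_pos by (intro inj_mat_mat_diag) auto
  moreover have "inj_mat (transpose_mat R)"
    unfolding R_eq by (rule inj_mat_transpose_hcat_one[OF T_tau_c_carrier])
  ultimately show ?thesis unfolding F_M_def by (rule inj_mat_mult) auto
qed

lemma inj_M: "inj_mat M"
  unfolding M_gram by (rule inj_mat_transpose_gram[OF carrier(8) inj_F_M])

lemma inj_S: "inj_mat S" and inj_K: "inj_mat K"
proof -
  have inj_L: "inj_mat L" unfolding L_gram by (rule inj_mat_transpose_gram[OF carrier(7) inj_F_L])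
  show "inj_mat S" unfolding S_def by (rule inj_mat_mult[OF inj_L inj_M]) auto
  show "inj_mat K" unfolding K_def
    by (rule inj_mat_mult[OF inj_mat_mult[OF inj_M inj_L] inj_M]) auto
qed

lemmas S_inverse = minv_inverse[OF carrier(10) inj_S]
  and M_inverse = minv_inverse[OF carrier(9) inj_M]
  and K_inverse = minv_inverse[OF carrier(11) inj_K]

lemma minv_dim [simp]:
  "dim_row (minv S) = N" "dim_col (minv S) = N" "dim_row (minv M) = N" "dim_col (minv M) = N"
  "dim_row (minv K) = N" "dim_col (minv K) = N"
  using minv_carrier[OF carrier(10)] minv_carrier[OF carrier(9)] minv_carrier[OF carrier(11)]
  by auto

lemma Y_carrier [simp]: "Y \<in> carrier_mat N (n + m)" and X_carrier [simp]: "X \<in> carrier_mat N N"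
  unfolding X_def Y_def using minv_carrier[OF carrier(10)] by auto

lemma dim_X_Y [simp]: "dim_row Y = N" "dim_col Y = n + m" "dim_row X = N" "dim_col X = N"
  using carrier_matD[OF Y_carrier] carrier_matD[OF X_carrier] by simp_all

lemma S_Y: "S * Y = B"
  unfolding Y_def by (rule mult_inverse_cancel_left[OF S_inverse(1)]) simp_all

lemma B_gram: "B * transpose_mat B = sw\<^sup>2 \<cdot>\<^sub>m L + sv\<^sup>2 \<cdot>\<^sub>m (L * (M * L))"
proof -
  let ?B1 = "sw \<cdot>\<^sub>m (transpose_mat D * E_inv_sqrt)" and ?B2 = "(- sv) \<cdot>\<^sub>m (L * R * W_sqrt)"
  have "B * transpose_mat B = ?B1 * transpose_mat ?B1 + ?B2 * transpose_mat ?B2"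
    unfolding B_def by (rule hcat_mult_transpose) auto
  also have "?B1 * transpose_mat ?B1 = sw\<^sup>2 \<cdot>\<^sub>m (transpose_mat F_L * F_L)"
    unfolding F_L_def by (simp add: transpose_smult_mat transpose_mult_dim mat_ring_dim_simps
        smult_smult_mat power2_eq_square) (simp add: E_inv_sqrt_def)
  also have "?B2 * transpose_mat ?B2 = sv\<^sup>2 \<cdot>\<^sub>m (L * (transpose_mat F_M * F_M * L))"
    unfolding F_M_def using L_symmetric
    by (simp add: transpose_smult_mat transpose_mult_dim mat_ring_dim_simps smult_smult_mat
        power2_eq_square) (simp add: W_sqrt_def)
  finally show ?thesis unfolding L_gram[symmetric] M_gram[symmetric] by (simp add: mult_assoc_dim)
qed

lemma K_mult_left: "dim_row C = N \<Longrightarrow> K * C = M * (L * (M * C))"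
  and K_mult_right: "dim_col C = N \<Longrightarrow> C * K = C * M * L * M"
  unfolding K_def by (simp_all add: mult_assoc_dim)

lemma L_M_minv_K: "L * (M * minv K) = minv M"
proof -
  have "M * (L * (M * minv K)) = 1\<^sub>m N" using K_inverse(1) K_mult_left[of "minv K"] by simp
  then have "minv M * (M * (L * (M * minv K))) = minv M" by simp
  then show ?thesis using mult_inverse_cancel_left[OF M_inverse(2)] by simp
qed

lemma minv_K_M_L: "minv K * (M * L) = minv M"
proof -
  have "minv K * (M * L) * M = 1\<^sub>m N" using K_inverse(2) K_mult_right[of "minv K"]
    by (simp add: mult_assoc_dim)
  then have "minv K * (M * L) * (M * minv M) = minv M"
    by (simp add: mult_assoc_dim[symmetric, of "minv K * (M * L)"])
  then show ?thesis using M_inverse(1) by simp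
qed

lemma X_eq: "X = sw\<^sup>2 \<cdot>\<^sub>m minv K + sv\<^sup>2 \<cdot>\<^sub>m minv M"
proof -
  define X' where "X' = sw\<^sup>2 \<cdot>\<^sub>m minv K + sv\<^sup>2 \<cdot>\<^sub>m minv M"
  have "L * (M * (minv K * (M * L))) = L" "L * (M * (minv M * (M * L))) = L * (M * L)"
    using minv_K_M_L M_inverse(1) mult_inverse_cancel_left[OF M_inverse(1), of "M * L"]
    by simp_all
  then have "S * (X' * transpose_mat S) = B * transpose_mat B"
    unfolding B_gram S_def X'_def using L_symmetric M_symmetric
    by (simp add: transpose_mult_dim mat_ring_dim_simps)
  also have "\<dots> = S * (X * transpose_mat S)"
    unfolding X_def S_Y[symmetric] by (simp add: transpose_mult_dim mult_assoc_dim)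
  finally have "S * (X * transpose_mat S) = S * (X' * transpose_mat S)" ..
  moreover have "X' \<in> carrier_mat N N"
    unfolding X'_def using minv_carrier[OF carrier(11)] minv_carrier[OF carrier(9)] by auto
  ultimately show ?thesis unfolding X'_def[symmetric]
    using transpose_congruence_cancel[OF carrier(10) minv_carrier[OF carrier(10)] S_inverse(2)]
    by simp
qed

lemma S_X_commute: "S * X = X * transpose_mat S"
proof -
  have "S * X = sw\<^sup>2 \<cdot>\<^sub>m minv M + sv\<^sup>2 \<cdot>\<^sub>m L"
    unfolding X_eq S_def by (simp add: mat_ring_dim_simps L_M_minv_K M_inverse(1))
  moreover have "X * transpose_mat S = sw\<^sup>2 \<cdot>\<^sub>m minv M + sv\<^sup>2 \<cdot>\<^sub>m L"
    unfolding X_eq S_def using L_symmetric M_symmetric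
    by (simp add: transpose_mult_dim mat_ring_dim_simps minv_K_M_L
        mult_inverse_cancel_left[OF M_inverse(2)])
  ultimately show ?thesis by simp
qed

lemma Z_mat_eq: "Z_mat n m src tgt w eps sw sv = transpose_mat R * (X * R)"
proof -
  have "Z_mat n m src tgt w eps sw sv =
    sw\<^sup>2 \<cdot>\<^sub>m (transpose_mat R * minv K * R) + sv\<^sup>2 \<cdot>\<^sub>m (transpose_mat R * minv M * R)"
    unfolding Z_mat_def Let_def R_def[symmetric] L_def[symmetric] W_def[symmetric]
      M_def[symmetric] K_def[symmetric] ..
  then show ?thesis unfolding X_eq by (simp add: mat_ring_dim_simps)
qed

definition "resolvent \<omega> = minv ((\<i> * complex_of_real \<omega>) \<cdot>\<^sub>m 1\<^sub>m N + cmat S)"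

lemma resolvent:
  "resolvent \<omega> \<in> carrier_mat N N"
  "resolvent \<omega> * ((\<i> * complex_of_real \<omega>) \<cdot>\<^sub>m 1\<^sub>m N + cmat S) = 1\<^sub>m N"
proof -
  have "cmat S = (mat_adjoint (cmat F_L) * cmat F_L) * (mat_adjoint (cmat F_M) * cmat F_M)"
    unfolding S_def L_gram M_gram by (simp add: cmat_mult mat_adjoint_cmat)
  moreover have "inj_mat (cmat F_L)" "inj_mat (cmat F_M)"
    using inj_F_L inj_F_M inj_mat_cmat_iff[OF carrier(7)] inj_mat_cmat_iff[OF carrier(8)]
    by simp_all
  ultimately have "inj_mat ((\<i> * complex_of_real \<omega>) \<cdot>\<^sub>m 1\<^sub>m N + cmat S)"
    using inj_mat_imag_shift_gram_mult[of "cmat F_L" n N "cmat F_M" m] by simp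
  moreover have "(\<i> * complex_of_real \<omega>) \<cdot>\<^sub>m 1\<^sub>m N + cmat S \<in> carrier_mat N N" by simp
  ultimately show "resolvent \<omega> \<in> carrier_mat N N"
    "resolvent \<omega> * ((\<i> * complex_of_real \<omega>) \<cdot>\<^sub>m 1\<^sub>m N + cmat S) = 1\<^sub>m N"
    unfolding resolvent_def by (simp_all add: minv_inverse(2) minv_carrier)
qed

lemma Sigma_tau_imag:
  "Sigma_tau n m src tgt w eps sw sv (\<i> * complex_of_real \<omega>) =
    cmat (transpose_mat R) * resolvent \<omega> * cmat B"
proof -
  have "L * R * W * transpose_mat R = S" unfolding S_def M_def by (simp add: mult_assoc_dim)
  then show ?thesis
    unfolding Sigma_tau_def Let_def resolvent_def R_def[symmetric] L_def[symmetric] W_def[symmetric]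
      D_def[symmetric] N_def[symmetric] E_inv_sqrt_def[symmetric] W_sqrt_def[symmetric]
      B_def[symmetric] by simp
qed

lemma Sigma_tau_gram_identity:
  fixes \<omega> :: real
  defines "G \<equiv> Sigma_tau n m src tgt w eps sw sv (\<i> * complex_of_real \<omega>)"
    and "F \<equiv> complex_of_real \<omega> \<cdot>\<^sub>m (cmat (transpose_mat R) * resolvent \<omega> * cmat Y)"
  shows "G * mat_adjoint G + F * mat_adjoint F = cmat (Z_mat n m src tgt w eps sw sv)"
proof -
  let ?P = "resolvent \<omega>" and ?A = "cmat S" and ?X = "cmat X" and ?R = "cmat R"
  have P: "?P \<in> carrier_mat N N" by (rule resolvent(1))
  have dP: "dim_row ?P = N" "dim_col ?P = N" using P by auto
  have BB: "cmat B * (cmat (transpose_mat B) * C) = ?A * (?X * (mat_adjoint ?A * C))"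
    if "dim_row C = N" for C
  proof -
    have "B * transpose_mat B = S * (X * transpose_mat S)"
      unfolding X_def S_Y[symmetric] by (simp add: transpose_mult_dim mult_assoc_dim)
    then have "cmat B * cmat (transpose_mat B) = ?A * ?X * mat_adjoint ?A"
      by (simp add: cmat_mult[symmetric] mat_adjoint_cmat mult_assoc_dim)
    have "cmat B * (cmat (transpose_mat B) * C) = cmat B * cmat (transpose_mat B) * C"
      using that by (simp add: mult_assoc_dim)
    also have "\<dots> = ?A * (?X * (mat_adjoint ?A * C))"
      unfolding \<open>cmat B * cmat (transpose_mat B) = _\<close> using that by (simp add: mult_assoc_dim)
    finally show ?thesis .
  qed
  have YY: "cmat Y * (cmat (transpose_mat Y) * C) = ?X * C" if "dim_row C = N" for C
    using that unfolding X_def by (simp add: cmat_mult mult_assoc_dim[symmetric, of "cmat Y"])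
  have resolvent_identity: "?P * (?A * ?X * mat_adjoint ?A) * mat_adjoint ?P
      + complex_of_real (\<omega>\<^sup>2) \<cdot>\<^sub>m (?P * ?X * mat_adjoint ?P) = ?X"
  proof (rule resolvent_gram_identity[OF _ _ P resolvent(2)])
    show "?A * ?X = ?X * mat_adjoint ?A"
      using S_X_commute by (simp add: cmat_mult[symmetric] mat_adjoint_cmat)
  qed simp_all
  have "G * mat_adjoint G =
      cmat (transpose_mat R) * (?P * (?A * ?X * mat_adjoint ?A) * mat_adjoint ?P) * ?R"
    unfolding G_def Sigma_tau_imag using dP
    by (simp add: mat_adjoint_mult mat_adjoint_cmat mult_assoc_dim BB)
  moreover have "F * mat_adjoint F =
      cmat (transpose_mat R) * (complex_of_real (\<omega>\<^sup>2) \<cdot>\<^sub>m (?P * ?X * mat_adjoint ?P)) * ?R"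
    unfolding F_def using dP
    by (simp add: mat_adjoint_mult mat_adjoint_smult mat_adjoint_cmat mat_ring_dim_simps YY
        smult_smult_mat power2_eq_square)
  ultimately have "G * mat_adjoint G + F * mat_adjoint F =
      cmat (transpose_mat R) * (?P * (?A * ?X * mat_adjoint ?A) * mat_adjoint ?P
        + complex_of_real (\<omega>\<^sup>2) \<cdot>\<^sub>m (?P * ?X * mat_adjoint ?P)) * ?R"
    using dP by (simp add: mat_ring_dim_simps)
  also have "\<dots> = cmat (transpose_mat R) * ?X * ?R" unfolding resolvent_identity ..
  also have "\<dots> = cmat (Z_mat n m src tgt w eps sw sv)"
    unfolding Z_mat_eq by (simp add: cmat_mult mult_assoc_dim)
  finally show ?thesis .
qed

lemma Sigma_tau_imag_carrier:
  "Sigma_tau n m src tgt w eps sw sv (\<i> * complex_of_real \<omega>) \<in> carrier_mat m (n + m)"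
  unfolding Sigma_tau_imag using resolvent(1) by (intro mult_carrier_mat[of _ m N]) auto

lemma cmat_Z_mat_gram:
  "cmat (Z_mat n m src tgt w eps sw sv) =
    Sigma_tau n m src tgt w eps sw sv 0 * mat_adjoint (Sigma_tau n m src tgt w eps sw sv 0)"
proof -
  let ?G = "Sigma_tau n m src tgt w eps sw sv 0"
  let ?C = "cmat (transpose_mat R) * resolvent 0 * cmat Y"
  have "?C \<in> carrier_mat m (n + m)" using resolvent(1) by (intro mult_carrier_mat[of _ m N]) auto
  then have "0 \<cdot>\<^sub>m ?C = 0\<^sub>m m (n + m)" by (intro eq_matI) auto
  moreover have "mat_adjoint (0\<^sub>m m (n + m)) = (0\<^sub>m (n + m) m :: complex mat)"
    by (intro eq_matI) auto
  ultimately have "(0 \<cdot>\<^sub>m ?C) * mat_adjoint (0 \<cdot>\<^sub>m ?C) = 0\<^sub>m m m" by simp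
  moreover have "?G * mat_adjoint ?G \<in> carrier_mat m m"
    using mult_mat_adjoint_self_carrier[OF Sigma_tau_imag_carrier[of 0]] by simp
  ultimately show ?thesis using Sigma_tau_gram_identity[of 0] by simp
qed

lemma sigma_max_Sigma_tau_le:
  "sigma_max (Sigma_tau n m src tgt w eps sw sv (\<i> * complex_of_real \<omega>))
    \<le> sigma_max (Sigma_tau n m src tgt w eps sw sv 0)"
proof -
  let ?G = "\<lambda>\<omega>. Sigma_tau n m src tgt w eps sw sv (\<i> * complex_of_real \<omega>)"
  let ?F = "complex_of_real \<omega> \<cdot>\<^sub>m (cmat (transpose_mat R) * resolvent \<omega> * cmat Y)"
  have G: "?G \<omega>' \<in> carrier_mat m (n + m)" for \<omega>' by (rule Sigma_tau_imag_carrier)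
  have F: "?F \<in> carrier_mat m (n + m)"
    using resolvent(1) by (intro smult_carrier_mat mult_carrier_mat[of _ m N]) auto
  have "(sigma_max (?G \<omega>))\<^sup>2 = spectral_radius (?G \<omega> * mat_adjoint (?G \<omega>))"
    using sigma_max_squared[OF G] m_pos by simp
  also have "\<dots> \<le> spectral_radius (?G \<omega> * mat_adjoint (?G \<omega>) + ?F * mat_adjoint ?F)"
    by (rule spectral_radius_gram_le_add[OF G F m_pos])
  also have "\<dots> = spectral_radius (?G 0 * mat_adjoint (?G 0))"
    unfolding Sigma_tau_gram_identity cmat_Z_mat_gram by simp
  also have "\<dots> = (sigma_max (?G 0))\<^sup>2"
    using sigma_max_squared[OF G[of 0]] m_pos by simp
  finally have "(sigma_max (?G \<omega>))\<^sup>2 \<le> (sigma_max (?G 0))\<^sup>2" .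
  moreover have "0 \<le> sigma_max (?G 0)" using sigma_max_nonneg[OF G[of 0]] m_pos by simp
  ultimately have "sigma_max (?G \<omega>) \<le> sigma_max (?G 0)" by (rule power2_le_imp_le)
  then show ?thesis by simp
qed

end

theorem theorem1:
  fixes n m :: nat and src tgt :: "nat \<Rightarrow> nat" and w eps :: "nat \<Rightarrow> real"
    and sigma_w sigma_v :: real
  assumes "n \<ge> 2"
    and "valid_graph n m src tgt"
    and "connected_in n src tgt {..<m}"
    and "n - 1 \<le> m"
    and "spanning_tree n src tgt {..<n - 1}"
    and "\<forall>l<m. w l > 0"
    and "\<forall>i<n. eps i > 0"
  shows "(hinf_norm (Sigma_tau n m src tgt w eps sigma_w sigma_v))\<^sup>2
           = sigma_max (cmat (Z_mat n m src tgt w eps sigma_w sigma_v))"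
proof -
  interpret edge_network n m src tgt w eps sigma_w sigma_v
    using assms by unfold_locales auto
  let ?G = "Sigma_tau n m src tgt w eps sigma_w sigma_v"
  have G0: "?G 0 \<in> carrier_mat m (n + m)" using Sigma_tau_imag_carrier[of 0] by simp
  have "hinf_norm ?G = (SUP \<omega>::real. sigma_max (?G (\<i> * complex_of_real \<omega>)))"
    unfolding hinf_norm_def ..
  also have "\<dots> = sigma_max (?G 0)"
  proof (rule cSup_eq_maximum)
    show "sigma_max (?G 0) \<in> range (\<lambda>\<omega>. sigma_max (?G (\<i> * complex_of_real \<omega>)))"
      by (rule range_eqI[of _ _ 0]) simp
  qed (auto intro: sigma_max_Sigma_tau_le)
  finally have "(hinf_norm ?G)\<^sup>2 = spectral_radius (?G 0 * mat_adjoint (?G 0))"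
    using sigma_max_squared[OF G0] m_pos by simp
  also have "\<dots> = sigma_max (?G 0 * mat_adjoint (?G 0))"
    using sigma_max_gram[OF G0] m_pos by simp
  finally show ?thesis unfolding cmat_Z_mat_gram .
qed

end
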